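(* Assume that $(\hat R,\hat F)$ satisfies conditions (i), (ii) and (iv), and let $M$ be a half-quantum matrix. Then for every $j\ge1$, \[ S^{(2)}_{j,j+1}M_{\bar j}M_{\overline{j+1}}A^{(2)}_{j,j+1}=0, \] and for every $q$-admissible positive integer $k$ and every $i=0,1,2,\dots$, \[ A^{(k)\uparrow i}\,M_{\overline{i+1\to i+k}}\,A^{(k)\uparrow i}=M_{\overline{i+1\to i+k}}\,A^{(k)\uparrow i},\qquad S^{(k)\uparrow i}\,M_{\overline{i+1\to i+k}}\,S^{(k)\uparrow i}=S^{(k)\uparrow i}\,M_{\overline{i+1\to i+k}}. \]
   Context: Let $V$ be a finite-dimensional complex vector space, $\mathrm{Id}$ the identity, $P$ the flip on $V\otimes V$. For an operator $X$ on $V$ (possibly with entries in an associative algebra $\mathfrak A$), $X_j$ denotes $X$ acting in the $j$-th tensor factor of $V^{\otimes m}$; for $Y$ on $V\otimes V$, $Y_{j,k}$ denotes $Y$ in factors $j,k$ and $Y_j:=Y_{j,j+1}$. For $Z$ on $V^{\otimes m}$, $Z^{\uparrow i}:=\mathrm{Id}_{V^{\otimes i}}\otimes Z$. $\mathrm{tr}_{(i_1,\dots,i_k)}$ is the partial trace. $j_q:=q^{j-1}+q^{j-3}+\dots+q^{-j+1}$; $j$ is $q$-admissible if $k_q\ne0$ for $k=1,\dots,j$. Let $q\in\mathbb C^*$, $\hat R,\hat F\in\mathrm{Aut}(V\otimes V)$. Conditions: (i) $\hat R_{12}\hat R_{23}\hat R_{12}=\hat R_{23}\hat R_{12}\hat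 R_{23}$, $\hat F_{12}\hat F_{23}\hat F_{12}=\hat F_{23}\hat F_{12}\hat F_{23}$, $\hat R_{12}\hat F_{23}\hat F_{12}=\hat F_{23}\hat F_{12}\hat R_{23}$, $\hat F_{12}\hat F_{23}\hat R_{12}=\hat R_{23}\hat F_{12}\hat F_{23}$. (ii) $2$ is $q$-admissible and $\hat R=qS^{(2)}-q^{-1}A^{(2)}$ with $S^{(2)},A^{(2)}$ idempotents, $S^{(2)}+A^{(2)}=\mathrm{Id}$. (iv) there is $\Psi\in\mathrm{Aut}(V\otimes V)$ with $\mathrm{tr}_{(2)}(\Psi_{12}\hat F_{23})=P_{13}$. Higher $q$-(anti)symmetrizers: $A^{(1)}=S^{(1)}=\mathrm{Id}$, and for $k+1$ $q$-admissible, $(k+1)_qA^{(k+1)}:=A^{(k)}(q^k\mathrm{Id}-k_q\hat R_k)A^{(k)}$, $(k+1)_qS^{(k+1)}:=S^{(k)}(q^{-k}\mathrm{Id}+k_q\hat R_k)S^{(k)}$ (equivalently with $A^{(k)\uparrow1},\hat R_1$, resp. $S^{(k)\uparrow1},\hat R_1$). For an $\mathfrak A$-valued $M$ on $V$: $M_{\bar1}:=M_1$, $M_{\overline{k+1}}:=\hat F_kM_{\bar k}\hat F_k^{-1}$, $M_{\overline{l\to k}}:=M_{\bar l}M_{\overline{l+1}}\cdots M_{\bar k}$. A half-quantum matrix is an $\mathfrak A$-valued $M$ with $S^{(2)}_{12}M_{\bar1}M_{\bar2}A^{(2)}_{12}=0$. *)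

theory Defs
  imports Complex_Main
begin

text \<open>V = C^n with standard basis indexed by {0..<n}. An operator on the
 m-fold tensor power V^{(x)m} with entries in a type 'b is a matrix indexed by index lists
 of length m (entries of the lists in {0..<n}); only values on valid index lists matter,
 equality of operators is equality on valid indices (meq).\<close>

type_synonym 'b op = "nat list \<Rightarrow> nat list \<Rightarrow> 'b"

definition tidx :: "nat \<Rightarrow> nat \<Rightarrow> nat list set" where
  "tidx n m = {xs. length xs = m \<and> set xs \<subseteq> {..<n}}"

definition mmul :: "nat \<Rightarrow> nat \<Rightarrow> ('b::semiring_0) op \<Rightarrow> 'b op \<Rightarrow> 'b op" where
  "mmul n m X Y = (\<lambda>r c. \<Sum>t\<in>tidx n m. X r t * Y t c)"

definition idm :: "('b::zero_neq_one) op" where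
  "idm = (\<lambda>r c. if r = c then 1 else 0)"

definition meq :: "nat \<Rightarrow> nat \<Rightarrow> 'b op \<Rightarrow> 'b op \<Rightarrow> bool" where
  "meq n m X Y = (\<forall>r\<in>tidx n m. \<forall>c\<in>tidx n m. X r c = Y r c)"

text \<open>lift i k Y: the operator Y on V^{(x)k} acting in tensor factors i+1,...,i+k
 (identity elsewhere). Thus X_j = lift (j-1) 1 X, Y_j = Y_{j,j+1} = lift (j-1) 2 Y,
 and Z^{up i} = lift i k Z.\<close>
definition lift :: "nat \<Rightarrow> nat \<Rightarrow> ('b::zero_neq_one) op \<Rightarrow> 'b op" where
  "lift i k Y = (\<lambda>r c. if take i r = take i c \<and> drop (i+k) r = drop (i+k) c
      then Y (take k (drop i r)) (take k (drop i c)) else 0)"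

definition cmap :: "(complex \<Rightarrow> 'b) \<Rightarrow> complex op \<Rightarrow> 'b op" where
  "cmap \<iota> X = (\<lambda>r c. \<iota> (X r c))"

definition ptr2 :: "nat \<Rightarrow> complex op \<Rightarrow> complex op" where
  "ptr2 n X = (\<lambda>r c. \<Sum>b<n. X [r!0, b, r!1] [c!0, b, c!1])"

definition flip :: "complex op" where
  "flip = (\<lambda>r c. if r!0 = c!1 \<and> r!1 = c!0 then 1 else 0)"

definition qnum :: "complex \<Rightarrow> nat \<Rightarrow> complex" where
  "qnum q j = (\<Sum>i<j. q powi (int j - 1 - 2 * int i))"

definition qadm :: "complex \<Rightarrow> nat \<Rightarrow> bool" where
  "qadm q j = (\<forall>k\<in>{1..j}. qnum q k \<noteq> 0)"

text \<open>q-antisymmetrizer / q-symmetrizer A^{(k)}, S^{(k)} as operators on V^{(x)k}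
 (the value at index 0 is irrelevant junk).\<close>
fun qA :: "nat \<Rightarrow> complex \<Rightarrow> complex op \<Rightarrow> nat \<Rightarrow> complex op" where
  "qA n q R 0 = idm"
| "qA n q R (Suc 0) = idm"
| "qA n q R (Suc (Suc k)) =
     (let B = lift 0 (Suc k) (qA n q R (Suc k)) in
      (\<lambda>r c. mmul n (Suc (Suc k))
               (mmul n (Suc (Suc k)) B
                  (\<lambda>r c. q ^ (Suc k) * idm r c - qnum q (Suc k) * lift k 2 R r c)) B r c
             / qnum q (Suc (Suc k))))"

fun qS :: "nat \<Rightarrow> complex \<Rightarrow> complex op \<Rightarrow> nat \<Rightarrow> complex op" where
  "qS n q R 0 = idm"
| "qS n q R (Suc 0) = idm"
| "qS n q R (Suc (Suc k)) =
     (let B = lift 0 (Suc k) (qS n q R (Suc k)) in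
      (\<lambda>r c. mmul n (Suc (Suc k))
               (mmul n (Suc (Suc k)) B
                  (\<lambda>r c. q powi (- int (Suc k)) * idm r c + qnum q (Suc k) * lift k 2 R r c)) B r c
             / qnum q (Suc (Suc k))))"

text \<open>M_{bar k} as an operator on V^{(x)m} (m >= k): M_{bar 1} = M_1,
 M_{bar (k+1)} = F_k M_{bar k} F_k^{-1}; Fi is the inverse of F. Index 0 is junk.\<close>
fun Mbar :: "nat \<Rightarrow> nat \<Rightarrow> (complex \<Rightarrow> 'b::ring_1) \<Rightarrow> complex op \<Rightarrow> complex op \<Rightarrow> 'b op
    \<Rightarrow> nat \<Rightarrow> 'b op" where
  "Mbar n m \<iota> F Fi M 0 = idm"
| "Mbar n m \<iota> F Fi M (Suc 0) = lift 0 1 M"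
| "Mbar n m \<iota> F Fi M (Suc (Suc k)) =
     mmul n m (mmul n m (cmap \<iota> (lift k 2 F)) (Mbar n m \<iota> F Fi M (Suc k))) (cmap \<iota> (lift k 2 Fi))"

text \<open>Mrange n m ... l len = M_{bar l} M_{bar (l+1)} ... M_{bar (l+len-1)}, so
 M_{bar (l -> k)} = Mrange ... l (k - l + 1).\<close>
fun Mrange :: "nat \<Rightarrow> nat \<Rightarrow> (complex \<Rightarrow> 'b::ring_1) \<Rightarrow> complex op \<Rightarrow> complex op \<Rightarrow> 'b op
    \<Rightarrow> nat \<Rightarrow> nat \<Rightarrow> 'b op" where
  "Mrange n m \<iota> F Fi M l 0 = idm"
| "Mrange n m \<iota> F Fi M l (Suc len) =
     mmul n m (Mrange n m \<iota> F Fi M l len) (Mbar n m \<iota> F Fi M (l + len))"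

end

theory Submission
  imports Defs
begin

(* For j = 1 the first claim is the definition of a half-quantum matrix. The exchange relations
   of (i) say that conjugation by F_j F_(j+1) moves S^(2)_j, A^(2)_j one position to the right,
   and it does the same with the pair M_(j+1) M_(j+2); this propagates the relation to all j.
   Since S^(2) = 1 - A^(2), the relation at position p says that M_(p+1) M_(p+2) A^(2)_p is
   unchanged by multiplying with A^(2)_p on the left, and dually for S^(2)_p. The other factors
   of M_(i+1 -> i+k) commute with A^(2)_p and S^(2)_p: the earlier ones act on other tensor
   factors, the later ones by (i) again. Hence X = M_(i+1 -> i+k) satisfies
   A^(2)_(i+j) X A^(2)_(i+j) = X A^(2)_(i+j) for j < k - 1.
   From the Hecke and braid relations one proves by induction along the defining recursion
   that R_(i+j) A^(k) = -q^-1 A^(k), hence A^(2)_(i+j) A^(k) = A^(k), and conversely that A^(k)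
   fixes everything fixed by all A^(2)_(i+j). Applied to X A^(k) this gives
   A^(k) X A^(k) = X A^(k); the symmetrizer is handled in the same way from the right. *)

section \<open>Operators on tensor powers\<close>

lemma finite_tidx [simp]: "finite (tidx n m)"
proof -
  have "tidx n m = {xs. set xs \<subseteq> {..<n} \<and> length xs = m}" unfolding tidx_def by auto
  thus ?thesis using finite_lists_length_eq[of "{..<n}" m] by simp
qed

lemma length_tidx: "r \<in> tidx n m \<Longrightarrow> length r = m"
  by (simp add: tidx_def)

text \<open>Operators only matter on valid indices, so we work with their restrictions \<open>restr\<close>;
  on restricted operators \<open>meq\<close> becomes equality and \<open>oprod\<close> is an associative product.\<close>

definition restr :: "nat \<Rightarrow> nat \<Rightarrow> ('b::zero) op \<Rightarrow> 'b op" where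
  "restr n m X = (\<lambda>r c. if r \<in> tidx n m \<and> c \<in> tidx n m then X r c else 0)"

definition oprod :: "nat \<Rightarrow> nat \<Rightarrow> ('b::semiring_0) op \<Rightarrow> 'b op \<Rightarrow> 'b op" where
  "oprod n m X Y = restr n m (mmul n m X Y)"

definition op_add :: "('b::plus) op \<Rightarrow> 'b op \<Rightarrow> 'b op" where
  "op_add X Y = (\<lambda>r c. X r c + Y r c)"

definition op_diff :: "('b::minus) op \<Rightarrow> 'b op \<Rightarrow> 'b op" where
  "op_diff X Y = (\<lambda>r c. X r c - Y r c)"

definition op_scale :: "'b::times \<Rightarrow> 'b op \<Rightarrow> 'b op" where
  "op_scale a X = (\<lambda>r c. a * X r c)"

lemma op_add_apply: "op_add X Y r c = X r c + Y r c"
  by (simp add: op_add_def)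

lemma op_diff_apply: "op_diff X Y r c = X r c - Y r c"
  by (simp add: op_diff_def)

lemma op_scale_apply: "op_scale a X r c = a * X r c"
  by (simp add: op_scale_def)

lemmas op_apply = op_add_apply op_diff_apply op_scale_apply

lemma meq_iff_restr_eq: "meq n m X Y \<longleftrightarrow> restr n m X = restr n m Y"
  unfolding meq_def restr_def by (auto simp: fun_eq_iff)

lemma restr_cong:
  "(\<And>r c. r \<in> tidx n m \<Longrightarrow> c \<in> tidx n m \<Longrightarrow> X r c = Y r c) \<Longrightarrow> restr n m X = restr n m Y"
  by (simp add: restr_def fun_eq_iff)

lemma restr_restr [simp]: "restr n m (restr n m X) = restr n m X"
  by (simp add: restr_def fun_eq_iff)

lemma restr_zero [simp]: "restr n m (\<lambda>_ _. 0) = (\<lambda>_ _. 0)"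
  by (simp add: restr_def fun_eq_iff)

lemma restr_add: "restr n m (op_add X Y) = op_add (restr n m X) (restr n m (Y::'b::monoid_add op))"
  by (simp add: op_apply restr_def fun_eq_iff)

lemma restr_diff: "restr n m (op_diff X Y) = op_diff (restr n m X) (restr n m (Y::'b::group_add op))"
  by (simp add: op_apply restr_def fun_eq_iff)

lemma restr_scale: "restr n m (op_scale a X) = op_scale a (restr n m (X::'b::mult_zero op))"
  by (simp add: op_apply restr_def fun_eq_iff)

lemma oprod_restr_left [simp]: "oprod n m (restr n m X) Y = oprod n m X Y"
  unfolding oprod_def by (rule restr_cong) (auto simp: mmul_def restr_def intro!: sum.cong)

lemma oprod_restr_right [simp]: "oprod n m X (restr n m Y) = oprod n m X Y"
  unfolding oprod_def by (rule restr_cong) (auto simp: mmul_def restr_def intro!: sum.cong)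

lemma restr_oprod [simp]: "restr n m (oprod n m X Y) = oprod n m X Y"
  by (simp add: oprod_def)

lemma restr_mmul [simp]: "restr n m (mmul n m X Y) = oprod n m X Y"
  by (simp add: oprod_def)

lemma oprod_mmul_left [simp]: "oprod n m (mmul n m X Y) Z = oprod n m (oprod n m X Y) Z"
  by (metis oprod_restr_left restr_mmul)

lemma oprod_mmul_right [simp]: "oprod n m Z (mmul n m X Y) = oprod n m Z (oprod n m X Y)"
  by (metis oprod_restr_right restr_mmul)

lemma mmul_assoc: "mmul n m (mmul n m X Y) Z = mmul n m X (mmul n m Y Z)"
proof (intro ext)
  fix r c
  have "mmul n m (mmul n m X Y) Z r c = (\<Sum>s\<in>tidx n m. \<Sum>t\<in>tidx n m. X r t * Y t s * Z s c)"
    unfolding mmul_def by (simp add: sum_distrib_right)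
  also have "\<dots> = (\<Sum>t\<in>tidx n m. \<Sum>s\<in>tidx n m. X r t * Y t s * Z s c)"
    by (rule sum.swap)
  also have "\<dots> = mmul n m X (mmul n m Y Z) r c"
    unfolding mmul_def by (simp add: sum_distrib_left mult.assoc)
  finally show "mmul n m (mmul n m X Y) Z r c = mmul n m X (mmul n m Y Z) r c" .
qed

lemma oprod_assoc: "oprod n m (oprod n m X Y) Z = oprod n m X (oprod n m Y Z)"
  by (metis mmul_assoc oprod_def oprod_restr_left oprod_restr_right)

lemma oprod_idm_left [simp]: "oprod n m idm X = restr n m (X::'b::semiring_1 op)"
  unfolding oprod_def
  by (rule restr_cong) (simp add: mmul_def idm_def if_distrib[of "\<lambda>x. x * _"] cong: if_cong)

lemma oprod_idm_right [simp]: "oprod n m X idm = restr n m (X::'b::semiring_1 op)"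
  unfolding oprod_def
  by (rule restr_cong) (simp add: mmul_def idm_def if_distrib[of "\<lambda>x. _ * x"] cong: if_cong)

lemma oprod_zero_left [simp]: "oprod n m (\<lambda>_ _. 0) X = (\<lambda>_ _. 0)"
  by (simp add: oprod_def mmul_def restr_def fun_eq_iff)

lemma oprod_zero_right [simp]: "oprod n m X (\<lambda>_ _. 0) = (\<lambda>_ _. 0)"
  by (simp add: oprod_def mmul_def restr_def fun_eq_iff)

lemma oprod_add_left: "oprod n m (op_add X Y) Z = op_add (oprod n m X Z) (oprod n m Y Z)"
  by (simp add: op_apply oprod_def mmul_def restr_def fun_eq_iff distrib_right sum.distrib)

lemma oprod_add_right: "oprod n m Z (op_add X Y) = op_add (oprod n m Z X) (oprod n m Z Y)"
  by (simp add: op_apply oprod_def mmul_def restr_def fun_eq_iff distrib_left sum.distrib)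

lemma oprod_diff_left: "oprod n m (op_diff X Y) Z = op_diff (oprod n m X Z) (oprod n m (Y::'b::ring op) Z)"
  by (simp add: op_apply oprod_def mmul_def restr_def fun_eq_iff left_diff_distrib sum_subtractf)

lemma oprod_diff_right: "oprod n m Z (op_diff X Y) = op_diff (oprod n m Z X) (oprod n m Z (Y::'b::ring op))"
  by (simp add: op_apply oprod_def mmul_def restr_def fun_eq_iff right_diff_distrib sum_subtractf)

lemma oprod_scale_left: "oprod n m (op_scale a X) Z = op_scale a (oprod n m X (Z::'b::semiring_0 op))"
  by (simp add: op_apply oprod_def mmul_def restr_def fun_eq_iff sum_distrib_left mult.assoc)

lemma oprod_scale_right:
  assumes "\<And>x. a * x = x * a"
  shows "oprod n m Z (op_scale a X) = op_scale a (oprod n m Z (X::'b::semiring_0 op))"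
proof -
  have "Z r t * (a * X t c) = a * (Z r t * X t c)" for r t c
    by (metis assms mult.assoc)
  thus ?thesis by (simp add: op_apply oprod_def mmul_def restr_def fun_eq_iff sum_distrib_left)
qed

lemma oprod_scale_right_comm:
  "oprod n m Z (op_scale a X) = op_scale a (oprod n m Z (X::'b::comm_semiring_0 op))"
  by (rule oprod_scale_right) (simp add: mult.commute)

lemma oprod_commute_oprod:
  "oprod n m X A = oprod n m A X \<Longrightarrow> oprod n m X B = oprod n m B X \<Longrightarrow>
   oprod n m X (oprod n m A B) = oprod n m (oprod n m A B) X"
  by (metis oprod_assoc)

lemma oprod_assoc_subst: "oprod n m A B = W \<Longrightarrow> oprod n m A (oprod n m B Y) = oprod n m W Y"
  by (metis oprod_assoc)

lemma intertwine_inverse: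
  assumes "oprod n m Z G = oprod n m G Z'"
    and "oprod n m G Gi = restr n m idm" and "oprod n m Gi G = restr n m idm"
    and "restr n m Z = Z"
  shows "oprod n m Z' Gi = oprod n m Gi (Z::'b::semiring_1 op)"
proof -
  have "oprod n m Gi Z = oprod n m (oprod n m Gi Z) (oprod n m G Gi)"
    using assms(2,4) by (simp add: oprod_assoc)
  also have "\<dots> = oprod n m Gi (oprod n m (oprod n m Z G) Gi)" by (simp add: oprod_assoc)
  also have "\<dots> = oprod n m (oprod n m Gi G) (oprod n m Z' Gi)" using assms(1) by (simp add: oprod_assoc)
  also have "\<dots> = oprod n m Z' Gi" using assms(3) by simp
  finally show ?thesis by simp
qed

lemma oprod_absorb_left:
  assumes "oprod n m A a = a" "oprod n m X A = oprod n m (oprod n m A X) A"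
  shows "oprod n m A (oprod n m X a) = oprod n m X (a::'b::semiring_0 op)"
proof -
  have "oprod n m A (oprod n m X a) = oprod n m (oprod n m (oprod n m A X) A) a"
    by (metis assms(1) oprod_assoc)
  then show ?thesis by (metis assms oprod_assoc)
qed

lemma oprod_absorb_right:
  assumes "oprod n m a A = a" "oprod n m A X = oprod n m (oprod n m A X) A"
  shows "oprod n m (oprod n m a X) A = oprod n m (a::'b::semiring_0 op) X"
  by (metis assms oprod_assoc)

lemma oprod_sandwich_absorb_right:
  assumes "oprod n m A P = oprod n m P A" "oprod n m A T = oprod n m T A"
    and "oprod n m Q A = oprod n m (oprod n m A Q) A"
  shows "oprod n m (oprod n m (oprod n m P Q) T) A = oprod n m (oprod n m A (oprod n m (oprod n m P Q) T)) (A::'b::semiring_0 op)"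
  by (metis assms oprod_assoc)

lemma oprod_sandwich_absorb_left:
  assumes "oprod n m A P = oprod n m P A" "oprod n m A T = oprod n m T A"
    and "oprod n m A Q = oprod n m (oprod n m A Q) A"
  shows "oprod n m A (oprod n m (oprod n m P Q) T) = oprod n m (oprod n m A (oprod n m (oprod n m P Q) T)) (A::'b::semiring_0 op)"
  by (metis assms oprod_assoc)

lemma oprod_complement_left:
  assumes "oprod n m (oprod n m (op_diff (restr n m idm) A) X) A = (\<lambda>_ _. 0)"
  shows "oprod n m X A = oprod n m (oprod n m A X) (A::'b::ring_1 op)"
proof -
  have "op_diff (oprod n m X A) (oprod n m (oprod n m A X) A) = (\<lambda>_ _. 0)"
    using assms by (simp add: oprod_diff_left)
  then show ?thesis by (simp add: fun_eq_iff op_apply)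
qed

lemma oprod_complement_right:
  assumes "oprod n m (oprod n m S X) (op_diff (restr n m idm) S) = (\<lambda>_ _. 0)"
  shows "oprod n m S X = oprod n m (oprod n m S X) (S::'b::ring_1 op)"
proof -
  have "op_diff (oprod n m S X) (oprod n m (oprod n m S X) S) = (\<lambda>_ _. 0)"
    using assms by (simp add: oprod_diff_right)
  then show ?thesis by (simp add: fun_eq_iff op_apply)
qed

lemma oprod_conj_commute:
  assumes "oprod n m Z G = oprod n m G Z'" "oprod n m Z' X = oprod n m X Z'"
    and "oprod n m G Gi = restr n m idm" "oprod n m Gi G = restr n m idm" "restr n m Z = Z"
  shows "oprod n m Z (oprod n m (oprod n m G X) Gi) = oprod n m (oprod n m (oprod n m G X) Gi) (Z::'b::semiring_1 op)"
proof -
  have inv: "oprod n m Z' Gi = oprod n m Gi Z" by (rule intertwine_inverse[OF assms(1,3-5)])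
  have "oprod n m Z (oprod n m (oprod n m G X) Gi) = oprod n m (oprod n m (oprod n m Z G) X) Gi"
    by (simp only: oprod_assoc)
  also have "\<dots> = oprod n m (oprod n m G (oprod n m Z' X)) Gi"
    unfolding assms(1) by (simp only: oprod_assoc)
  also have "\<dots> = oprod n m (oprod n m G X) (oprod n m Z' Gi)"
    unfolding assms(2) by (simp only: oprod_assoc)
  also have "\<dots> = oprod n m (oprod n m (oprod n m G X) Gi) Z"
    unfolding inv by (simp only: oprod_assoc)
  finally show ?thesis .
qed

section \<open>Operators acting on consecutive tensor factors\<close>

lemma take_drop_in_tidx: "r \<in> tidx n m \<Longrightarrow> i + k \<le> m \<Longrightarrow> take k (drop i r) \<in> tidx n k"
  unfolding tidx_def by (auto dest: in_set_takeD in_set_dropD)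

lemma take_drop_decomp: "r = take i r @ take k (drop i r) @ drop (i+k) r"
  by (metis append_take_drop_id drop_drop add.commute)

lemma restr_lift_restr: "i + k \<le> m \<Longrightarrow> restr n m (lift i k (restr n k X)) = restr n m (lift i k X)"
  by (rule restr_cong) (simp add: lift_def restr_def take_drop_in_tidx)

lemma lift_idm [simp]: "lift i k idm = idm"
proof (intro ext)
  fix r c :: "nat list"
  have "r = c" if "take i r = take i c" "take k (drop i r) = take k (drop i c)"
      "drop (i+k) r = drop (i+k) c"
    using that take_drop_decomp[of r i k] take_drop_decomp[of c i k] by metis
  thus "lift i k idm r c = idm r c" by (auto simp: lift_def idm_def)
qed

lemma lift_zero [simp]: "lift i k (\<lambda>_ _. 0) = (\<lambda>_ _. 0)"
  by (simp add: lift_def fun_eq_iff op_apply)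

lemma lift_add: "lift i k (op_add X Y) = op_add (lift i k X) (lift i k (Y::'b::{monoid_add,zero_neq_one} op))"
  by (simp add: lift_def fun_eq_iff op_apply)

lemma lift_diff: "lift i k (op_diff X Y) = op_diff (lift i k X) (lift i k (Y::'b::{group_add,zero_neq_one} op))"
  by (simp add: lift_def fun_eq_iff op_apply)

lemma lift_scale: "lift i k (op_scale a X) = op_scale a (lift i k (X::'b::{mult_zero,zero_neq_one} op))"
  by (simp add: lift_def fun_eq_iff op_apply)

lemma restr_lift_lift:
  assumes "b + k \<le> p" "a + p \<le> m"
  shows "restr n m (lift a p (lift b k Y)) = restr n m (lift (a+b) k Y)"
proof (rule restr_cong)
  fix r c assume "r \<in> tidx n m" "c \<in> tidx n m"
  then have len: "length r = m" "length c = m" by (simp_all add: length_tidx)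
  have pre: "take (a+b) x = take a x @ take b (take p (drop a x))" for x :: "nat list"
    using assms by (simp add: take_add)
  have suf: "drop (a+b+k) x = drop (b+k) (take p (drop a x)) @ drop (a+p) x" for x :: "nat list"
  proof -
    have "drop (b+k) (take p (drop a x)) = take (p - (b+k)) (drop (a+b+k) x)"
      using assms by (simp add: drop_take ac_simps)
    moreover have "drop (a+p) x = drop (p - (b+k)) (drop (a+b+k) x)"
      using assms by (simp add: add.commute)
    ultimately show ?thesis by (metis append_take_drop_id)
  qed
  have mid: "take k (drop b (take p (drop a x))) = take k (drop (a+b) x)" for x :: "nat list"
    using assms by (simp add: drop_take min_def add.commute)
  show "lift a p (lift b k Y) r c = lift (a+b) k Y r c"
    unfolding lift_def pre suf mid using len assms by auto
qed

lemma agree_outside_iff_nth: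
  assumes "length r = m" "length c = m" "i + k \<le> m"
  shows "(take i r = take i c \<and> drop (i+k) r = drop (i+k) c) \<longleftrightarrow>
         (\<forall>p<m. (p < i \<or> i + k \<le> p) \<longrightarrow> r!p = c!p)"
proof
  assume "take i r = take i c \<and> drop (i+k) r = drop (i+k) c"
  then have "take i r ! p = take i c ! p" "drop (i+k) r ! (p - (i+k)) = drop (i+k) c ! (p - (i+k))" for p
    by simp_all
  with assms show "\<forall>p<m. (p < i \<or> i + k \<le> p) \<longrightarrow> r!p = c!p"
    by (metis add_diff_inverse_nat le_add_diff_inverse2 not_less nth_drop nth_take)
next
  assume "\<forall>p<m. (p < i \<or> i + k \<le> p) \<longrightarrow> r!p = c!p"
  with assms show "take i r = take i c \<and> drop (i+k) r = drop (i+k) c"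
    by (auto intro!: nth_equalityI)
qed

lemma lift_conv_nth:
  assumes "length r = m" "length c = m" "i + k \<le> m"
  shows "lift i k Y r c = (if \<forall>p<m. (p < i \<or> i + k \<le> p) \<longrightarrow> r!p = c!p
            then Y (take k (drop i r)) (take k (drop i c)) else 0)"
  unfolding lift_def using agree_outside_iff_nth[OF assms] by simp

lemma lift_nonzero_imp_agree: "lift i k Y r c \<noteq> 0 \<Longrightarrow> take i r = take i c \<and> drop (i+k) r = drop (i+k) c"
  by (meson lift_def)

lemma take_drop_eq_if_nth_eq:
  assumes "length r = m" "length t = m" "i + k \<le> m" "\<And>p. i \<le> p \<Longrightarrow> p < i + k \<Longrightarrow> t!p = r!p"
  shows "take k (drop i t) = take k (drop i r)"
  using assms by (auto simp: list_eq_iff_nth_eq)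

lemma bij_betw_fill_window:
  assumes r: "r \<in> tidx n m" and ik: "i + k \<le> m"
  shows "bij_betw (\<lambda>u. take i r @ u @ drop (i+k) r) (tidx n k)
           {t \<in> tidx n m. take i t = take i r \<and> drop (i+k) t = drop (i+k) r}"
proof (rule bij_betw_byWitness[where f'="\<lambda>t. take k (drop i t)"])
  have lr: "length r = m" using r by (simp add: length_tidx)
  show "\<forall>u\<in>tidx n k. take k (drop i (take i r @ u @ drop (i+k) r)) = u"
    using lr ik by (simp add: length_tidx)
  show "\<forall>t\<in>{t \<in> tidx n m. take i t = take i r \<and> drop (i+k) t = drop (i+k) r}.
          take i r @ take k (drop i t) @ drop (i+k) r = t"
  proof
    fix t assume "t \<in> {t \<in> tidx n m. take i t = take i r \<and> drop (i+k) t = drop (i+k) r}"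
    then show "take i r @ take k (drop i t) @ drop (i+k) r = t"
      using take_drop_decomp[of t i k] by simp
  qed
  show "(\<lambda>t. take k (drop i t)) ` {t \<in> tidx n m. take i t = take i r \<and> drop (i+k) t = drop (i+k) r}
          \<subseteq> tidx n k"
    using take_drop_in_tidx ik by blast
  show "(\<lambda>u. take i r @ u @ drop (i+k) r) ` tidx n k
          \<subseteq> {t \<in> tidx n m. take i t = take i r \<and> drop (i+k) t = drop (i+k) r}"
  proof (intro subsetI CollectI conjI; elim imageE)
    fix t u assume u: "u \<in> tidx n k" and t: "t = take i r @ u @ drop (i+k) r"
    have "length u = k" using u by (simp add: length_tidx)
    then show "take i t = take i r" "drop (i+k) t = drop (i+k) r"
      using t lr ik by simp_all
    show "t \<in> tidx n m"
      using t u r \<open>length u = k\<close> lr ik by (auto simp: tidx_def dest: in_set_takeD in_set_dropD)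
  qed
qed

lemma mmul_lift_same:
  assumes r: "r \<in> tidx n m" and ik: "i + k \<le> m"
  shows "mmul n m (lift i k X) (lift i k Y) r c = lift i k (mmul n k X Y) r c"
proof (cases "take i r = take i c \<and> drop (i+k) r = drop (i+k) c")
  case False
  then have "lift i k X r t * lift i k Y t c = 0" for t
    by (auto simp: lift_def)
  moreover have "lift i k (mmul n k X Y) r c = 0" using False by (auto simp: lift_def)
  ultimately show ?thesis by (simp add: mmul_def[of n m])
next
  case True
  let ?T = "{t \<in> tidx n m. take i t = take i r \<and> drop (i+k) t = drop (i+k) r}"
  let ?f = "\<lambda>t. X (take k (drop i r)) (take k (drop i t)) * Y (take k (drop i t)) (take k (drop i c))"
  have "mmul n m (lift i k X) (lift i k Y) r c = (\<Sum>t\<in>?T. lift i k X r t * lift i k Y t c)"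
    unfolding mmul_def by (rule sum.mono_neutral_right) (auto simp: lift_def)
  also have "\<dots> = sum ?f ?T"
    using True by (intro sum.cong) (auto simp: lift_def)
  also have "\<dots> = (\<Sum>u\<in>tidx n k. ?f (take i r @ u @ drop (i+k) r))"
    by (rule sum.reindex_bij_betw[OF bij_betw_fill_window[OF r ik], symmetric])
  also have "\<dots> = (\<Sum>u\<in>tidx n k. X (take k (drop i r)) u * Y u (take k (drop i c)))"
    using r ik by (intro sum.cong) (simp_all add: length_tidx)
  also have "\<dots> = lift i k (mmul n k X Y) r c"
    using True by (simp add: lift_def mmul_def)
  finally show ?thesis .
qed

lemma oprod_lift_same:
  assumes "i + k \<le> m"
  shows "oprod n m (lift i k X) (lift i k Y) = restr n m (lift i k (oprod n k X Y))"
proof -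
  have "restr n m (lift i k (oprod n k X Y)) = restr n m (lift i k (mmul n k X Y))"
    using restr_lift_restr[OF assms] unfolding oprod_def by metis
  also have "\<dots> = oprod n m (lift i k X) (lift i k Y)"
    unfolding oprod_def by (rule restr_cong) (simp add: mmul_lift_same assms)
  finally show ?thesis by simp
qed

lemma restr_lift_mmul:
  "i + k \<le> m \<Longrightarrow> restr n m (lift i k (mmul n k X Y)) = oprod n m (lift i k X) (lift i k Y)"
  by (metis restr_mmul restr_lift_restr oprod_lift_same)

definition window_splice :: "nat \<Rightarrow> nat \<Rightarrow> nat list \<Rightarrow> nat list \<Rightarrow> nat list" where
  "window_splice i k r c = map (\<lambda>p. if i \<le> p \<and> p < i + k then r!p else c!p) [0..<length c]"

lemma window_splice_in_tidx: "r \<in> tidx n m \<Longrightarrow> c \<in> tidx n m \<Longrightarrow> window_splice i k r c \<in> tidx n m"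
  by (auto simp: window_splice_def tidx_def subset_iff)

lemma length_window_splice [simp]: "length (window_splice i k r c) = length c"
  by (simp add: window_splice_def)

lemma nth_window_splice:
  "p < length c \<Longrightarrow> window_splice i k r c ! p = (if i \<le> p \<and> p < i + k then r!p else c!p)"
  by (simp add: window_splice_def)

lemma lift_mult_lift_nonzero_imp:
  fixes X Y :: "'b::semiring_1 op"
  assumes r: "r \<in> tidx n m" and c: "c \<in> tidx n m" and t: "t \<in> tidx n m"
    and ik: "i + k \<le> m" and ik': "i' + k' \<le> m" and disj: "i + k \<le> i' \<or> i' + k' \<le> i"
    and nz: "lift i k X r t * lift i' k' Y t c \<noteq> 0"
  shows "t = window_splice i' k' r c"
proof (rule nth_equalityI)
  have lr: "length r = m" and lc: "length c = m" and lt: "length t = m"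
    using r c t by (auto simp: length_tidx)
  then show "length t = length (window_splice i' k' r c)" by simp
  have "lift i k X r t \<noteq> 0" "lift i' k' Y t c \<noteq> 0"
    using nz by (metis mult_zero_left mult_zero_right)+
  then have "take i r = take i t \<and> drop (i+k) r = drop (i+k) t"
    and "take i' t = take i' c \<and> drop (i'+k') t = drop (i'+k') c"
    by (auto dest: lift_nonzero_imp_agree)
  then have h1: "\<forall>p<m. (p < i \<or> i + k \<le> p) \<longrightarrow> r!p = t!p"
    and h2: "\<forall>p<m. (p < i' \<or> i' + k' \<le> p) \<longrightarrow> t!p = c!p"
    using agree_outside_iff_nth[OF lr lt ik] agree_outside_iff_nth[OF lt lc ik'] by blast+
  show "t ! p = window_splice i' k' r c ! p" if "p < length t" for p
  proof (cases "i' \<le> p \<and> p < i' + k'")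
    case True
    then have "p < i \<or> i + k \<le> p" using disj by linarith
    then show ?thesis using h1 True that lt lc by (auto simp: nth_window_splice)
  next
    case False
    then have "p < i' \<or> i' + k' \<le> p" by linarith
    then show ?thesis using h2 False that lt lc by (auto simp: nth_window_splice)
  qed
qed

lemma lift_mult_lift_window_splice:
  fixes X Y :: "'b::semiring_1 op"
  assumes r: "r \<in> tidx n m" and c: "c \<in> tidx n m"
    and ik: "i + k \<le> m" and ik': "i' + k' \<le> m" and disj: "i + k \<le> i' \<or> i' + k' \<le> i"
  shows "lift i k X r (window_splice i' k' r c) * lift i' k' Y (window_splice i' k' r c) c =
    (if \<forall>p<m. (p < i \<or> i + k \<le> p) \<and> (p < i' \<or> i' + k' \<le> p) \<longrightarrow> r!p = c!p
     then X (take k (drop i r)) (take k (drop i c)) * Y (take k' (drop i' r)) (take k' (drop i' c))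
     else 0)"
proof -
  define t0 where "t0 = window_splice i' k' r c"
  have lr: "length r = m" and lc: "length c = m" using r c by (auto simp: length_tidx)
  then have lt0: "length t0 = m" and t0n: "\<And>p. p < m \<Longrightarrow> t0 ! p = (if i' \<le> p \<and> p < i' + k' then r!p else c!p)"
    by (simp_all add: t0_def nth_window_splice)
  have "r!p = t0!p \<longleftrightarrow> ((p < i' \<or> i' + k' \<le> p) \<longrightarrow> r!p = c!p)" if "p < m" for p
    using t0n[OF that] by auto
  then have cond: "(\<forall>p<m. (p < i \<or> i + k \<le> p) \<longrightarrow> r!p = t0!p) \<longleftrightarrow>
        (\<forall>p<m. (p < i \<or> i + k \<le> p) \<and> (p < i' \<or> i' + k' \<le> p) \<longrightarrow> r!p = c!p)"
    by blast
  have agree: "\<forall>p<m. (p < i' \<or> i' + k' \<le> p) \<longrightarrow> t0!p = c!p" using t0n by auto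
  have seg: "take k (drop i t0) = take k (drop i c)"
  proof (rule take_drop_eq_if_nth_eq[OF lc lt0 ik])
    fix p assume "i \<le> p" "p < i + k"
    then have "p < m" "\<not> (i' \<le> p \<and> p < i' + k')" using ik disj by linarith+
    then show "t0!p = c!p" using t0n[of p] by auto
  qed
  have seg': "take k' (drop i' t0) = take k' (drop i' r)"
    by (rule take_drop_eq_if_nth_eq[OF lr lt0 ik']) (use t0n ik' in simp)
  have "lift i' k' Y t0 c = Y (take k' (drop i' r)) (take k' (drop i' c))"
    unfolding lift_conv_nth[OF lt0 lc ik'] seg' using agree by simp
  then show ?thesis
    unfolding t0_def[symmetric] lift_conv_nth[OF lr lt0 ik] cond seg by auto
qed

lemma mmul_lift_disjoint:
  fixes X Y :: "'b::semiring_1 op"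
  assumes r: "r \<in> tidx n m" and c: "c \<in> tidx n m"
    and ik: "i + k \<le> m" and ik': "i' + k' \<le> m" and disj: "i + k \<le> i' \<or> i' + k' \<le> i"
  shows "mmul n m (lift i k X) (lift i' k' Y) r c =
    (if \<forall>p<m. (p < i \<or> i + k \<le> p) \<and> (p < i' \<or> i' + k' \<le> p) \<longrightarrow> r!p = c!p
     then X (take k (drop i r)) (take k (drop i c)) * Y (take k' (drop i' r)) (take k' (drop i' c))
     else 0)"
proof -
  let ?t0 = "window_splice i' k' r c"
  have "mmul n m (lift i k X) (lift i' k' Y) r c = (\<Sum>t\<in>{?t0}. lift i k X r t * lift i' k' Y t c)"
    unfolding mmul_def
  proof (rule sum.mono_neutral_right)
    show "\<forall>t\<in>tidx n m - {?t0}. lift i k X r t * lift i' k' Y t c = 0"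
      using lift_mult_lift_nonzero_imp[OF r c _ ik ik' disj] by blast
  qed (use window_splice_in_tidx[OF r c] in auto)
  also have "\<dots> = lift i k X r ?t0 * lift i' k' Y ?t0 c" by simp
  finally show ?thesis unfolding lift_mult_lift_window_splice[OF assms] .
qed

lemma oprod_lift_commute:
  assumes "i + k \<le> m" "i' + k' \<le> m" "i + k \<le> i' \<or> i' + k' \<le> i"
    and "\<And>a b a' b'. X a b * Y a' b' = Y a' b' * X a b"
  shows "oprod n m (lift i k X) (lift i' k' Y) = oprod n m (lift i' k' Y) (lift i k (X::'b::semiring_1 op))"
  unfolding oprod_def
proof (rule restr_cong)
  fix r c assume rc: "r \<in> tidx n m" "c \<in> tidx n m"
  have "i' + k' \<le> i \<or> i + k \<le> i'" using assms(3) by blast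
  then show "mmul n m (lift i k X) (lift i' k' Y) r c = mmul n m (lift i' k' Y) (lift i k X) r c"
    using mmul_lift_disjoint[OF rc assms(1-3), of X Y] mmul_lift_disjoint[OF rc assms(2,1), of Y X]
    by (auto simp: assms(4) conj_commute)
qed

lemma restr_lift_cong: "i + k \<le> m \<Longrightarrow> restr n k X = restr n k Y \<Longrightarrow> restr n m (lift i k X) = restr n m (lift i k Y)"
  by (metis restr_lift_restr)

lemma oprod_lift_eq:
  "oprod n k X Y = restr n k W \<Longrightarrow> i + k \<le> m \<Longrightarrow> oprod n m (lift i k X) (lift i k Y) = restr n m (lift i k W)"
  by (metis oprod_lift_same restr_lift_restr)

lemma restr_lift_oprod:
  "i + k \<le> m \<Longrightarrow> restr n m (lift i k (oprod n k X Y)) = oprod n m (restr n m (lift i k X)) (restr n m (lift i k Y))"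
  by (simp add: oprod_lift_same)

lemma restr_lift_mmul3:
  assumes "i + k \<le> m"
  shows "restr n m (lift i k (mmul n k (mmul n k X Y) Z)) =
    oprod n m (oprod n m (restr n m (lift i k X)) (restr n m (lift i k Y))) (restr n m (lift i k Z))"
proof -
  have "restr n m (lift i k (mmul n k (mmul n k X Y) Z)) = oprod n m (lift i k (mmul n k X Y)) (lift i k Z)"
    by (rule restr_lift_mmul[OF assms])
  also have "\<dots> = oprod n m (restr n m (lift i k (mmul n k X Y))) (lift i k Z)"
    by (rule oprod_restr_left[symmetric])
  also have "\<dots> = oprod n m (oprod n m (lift i k X) (lift i k Y)) (lift i k Z)"
    by (simp only: restr_lift_mmul[OF assms])
  finally show ?thesis by simp
qed

lemma oprod_lift_lift_left:
  "b + k \<le> p \<Longrightarrow> a + p \<le> m \<Longrightarrow> oprod n m (lift a p (lift b k Y)) X = oprod n m (lift (a+b) k Y) X"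
  by (metis restr_lift_lift oprod_restr_left)

lemma oprod_lift_lift_right:
  "b + k \<le> p \<Longrightarrow> a + p \<le> m \<Longrightarrow> oprod n m X (lift a p (lift b k Y)) = oprod n m X (lift (a+b) k Y)"
  by (metis restr_lift_lift oprod_restr_right)

lemma three_factor_relation_lift:
  assumes rel: "oprod n 3 (oprod n 3 (lift 0 2 X) (lift 1 2 Y)) (lift 0 2 Z) =
                oprod n 3 (oprod n 3 (lift 1 2 X') (lift 0 2 Y')) (lift 1 2 Z')"
    and jm: "j + 3 \<le> m"
  shows "oprod n m (oprod n m (lift j 2 X) (lift (j+1) 2 Y)) (lift j 2 Z) =
         oprod n m (oprod n m (lift (j+1) 2 X') (lift j 2 Y')) (lift (j+1) 2 Z')"
proof -
  have lift3: "restr n m (lift j 3 (oprod n 3 (oprod n 3 U V) W)) =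
      oprod n m (oprod n m (lift j 3 U) (lift j 3 V)) (lift j 3 W)" for U V W :: "'a op"
    by (metis jm oprod_lift_same oprod_restr_left)
  have "oprod n m (oprod n m (lift j 3 (lift 0 2 X)) (lift j 3 (lift 1 2 Y))) (lift j 3 (lift 0 2 Z)) =
        oprod n m (oprod n m (lift j 3 (lift 1 2 X')) (lift j 3 (lift 0 2 Y'))) (lift j 3 (lift 1 2 Z'))"
    using lift3[of "lift 0 2 X"] lift3[of "lift 1 2 X'"] rel by metis
  then show ?thesis
    using jm by (simp add: oprod_lift_lift_left oprod_lift_lift_right oprod_assoc)
qed

section \<open>Operators with entries in the algebra\<close>

definition scalar_hom :: "(complex \<Rightarrow> 'b::ring_1) \<Rightarrow> bool" where
  "scalar_hom \<iota> \<longleftrightarrow> (\<forall>a b. \<iota> (a + b) = \<iota> a + \<iota> b) \<and> (\<forall>a b. \<iota> (a * b) = \<iota> a * \<iota> b) \<and> \<iota> 1 = 1"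

lemma scalar_hom_add: "scalar_hom \<iota> \<Longrightarrow> \<iota> (a + b) = \<iota> a + \<iota> b"
  unfolding scalar_hom_def by blast

lemma scalar_hom_mult: "scalar_hom \<iota> \<Longrightarrow> \<iota> (a * b) = \<iota> a * \<iota> b"
  unfolding scalar_hom_def by blast

lemma scalar_hom_1: "scalar_hom \<iota> \<Longrightarrow> \<iota> 1 = 1"
  unfolding scalar_hom_def by blast

lemma scalar_hom_0: "scalar_hom \<iota> \<Longrightarrow> \<iota> 0 = 0"
  using scalar_hom_add[of \<iota> 0 0] by simp

lemma scalar_hom_diff: "scalar_hom \<iota> \<Longrightarrow> \<iota> (a - b) = \<iota> a - \<iota> b"
  using scalar_hom_add[of \<iota> "a - b" b] by (simp add: algebra_simps)

lemma scalar_hom_sum: "scalar_hom \<iota> \<Longrightarrow> \<iota> (sum f S) = (\<Sum>x\<in>S. \<iota> (f x))"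
  using sum_comp_morphism[of \<iota> f S] by (simp add: scalar_hom_0 scalar_hom_add comp_def)

lemma cmap_lift: "scalar_hom \<iota> \<Longrightarrow> cmap \<iota> (lift i k Z) = lift i k (cmap \<iota> Z)"
  by (simp add: fun_eq_iff cmap_def lift_def scalar_hom_0)

lemma cmap_restr: "scalar_hom \<iota> \<Longrightarrow> cmap \<iota> (restr n m X) = restr n m (cmap \<iota> X)"
  by (simp add: fun_eq_iff cmap_def restr_def scalar_hom_0)

lemma cmap_oprod: "scalar_hom \<iota> \<Longrightarrow> cmap \<iota> (oprod n m X Y) = oprod n m (cmap \<iota> X) (cmap \<iota> Y)"
  by (simp add: fun_eq_iff cmap_def oprod_def restr_def mmul_def scalar_hom_0 scalar_hom_sum scalar_hom_mult)

lemma cmap_idm: "scalar_hom \<iota> \<Longrightarrow> cmap \<iota> idm = idm"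
  by (simp add: fun_eq_iff cmap_def idm_def scalar_hom_0 scalar_hom_1)

lemma cmap_add: "scalar_hom \<iota> \<Longrightarrow> cmap \<iota> (op_add X Y) = op_add (cmap \<iota> X) (cmap \<iota> Y)"
  by (simp add: fun_eq_iff cmap_def scalar_hom_add op_apply)

lemma cmap_diff: "scalar_hom \<iota> \<Longrightarrow> cmap \<iota> (op_diff X Y) = op_diff (cmap \<iota> X) (cmap \<iota> Y)"
  by (simp add: fun_eq_iff cmap_def scalar_hom_diff op_apply)

lemma cmap_scale: "scalar_hom \<iota> \<Longrightarrow> cmap \<iota> (op_scale a X) = op_scale (\<iota> a) (cmap \<iota> X)"
  by (simp add: fun_eq_iff cmap_def scalar_hom_mult op_apply)

lemma cmap_id [simp]: "cmap (\<lambda>x. x) X = X"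
  by (simp add: cmap_def)

lemma scalar_hom_id: "scalar_hom (\<lambda>x::complex. x)"
  by (simp add: scalar_hom_def)

section \<open>Quantum numbers\<close>

lemma qnum_1 [simp]: "qnum q 1 = 1"
  by (simp add: qnum_def)

lemma qnum_Suc_left: "q \<noteq> 0 \<Longrightarrow> qnum q (Suc k) = q ^ k + inverse q * qnum q k"
proof -
  assume q: "q \<noteq> 0"
  have shift: "q powi (int (Suc k) - 1 - 2 * int (Suc i)) = inverse q * q powi (int k - 1 - 2 * int i)" for i
  proof -
    have e: "int (Suc k) - 1 - 2 * int (Suc i) = (int k - 1 - 2 * int i) + (-1)" by simp
    show ?thesis unfolding e
      by (subst power_int_add) (use q in \<open>simp_all add: power_int_minus mult.commute\<close>)
  qed
  have "qnum q (Suc k) = q powi (int (Suc k) - 1) + (\<Sum>i<k. q powi (int (Suc k) - 1 - 2 * int (Suc i)))"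
    unfolding qnum_def by (subst sum.lessThan_Suc_shift) simp
  also have "\<dots> = q ^ k + inverse q * qnum q k"
    unfolding shift qnum_def by (simp add: sum_distrib_left)
  finally show ?thesis .
qed

lemma qnum_Suc_right: "q \<noteq> 0 \<Longrightarrow> qnum q (Suc k) = q powi (- int k) + q * qnum q k"
proof -
  assume q: "q \<noteq> 0"
  have shift: "q powi (int (Suc k) - 1 - 2 * int i) = q * q powi (int k - 1 - 2 * int i)" for i
  proof -
    have e: "int (Suc k) - 1 - 2 * int i = (int k - 1 - 2 * int i) + 1" by simp
    show ?thesis unfolding e by (rule power_int_add_1') (use q in simp)
  qed
  have "qnum q (Suc k) = (\<Sum>i<k. q powi (int (Suc k) - 1 - 2 * int i)) + q powi (int (Suc k) - 1 - 2 * int k)"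
    unfolding qnum_def by (rule sum.lessThan_Suc)
  also have "\<dots> = q powi (- int k) + q * qnum q k"
    unfolding shift qnum_def using power_int_add_1'[of q "- int k - 1"] q by (simp add: sum_distrib_left)
  finally show ?thesis .
qed

lemma qnum_2: "q \<noteq> 0 \<Longrightarrow> qnum q 2 = q + inverse q"
  using qnum_Suc_left[of q 1] by (simp add: numeral_2_eq_2 del: qnum_1) (simp add: qnum_def)

lemma qadm_mono: "qadm q k \<Longrightarrow> j \<le> k \<Longrightarrow> qadm q j"
  by (auto simp: qadm_def)

lemma qadm_qnum_nonzero: "qadm q k \<Longrightarrow> 1 \<le> j \<Longrightarrow> j \<le> k \<Longrightarrow> qnum q j \<noteq> 0"
  by (auto simp: qadm_def)

text \<open>The hypotheses of the theorem, except the invertibility of \<open>R\<close>, the idempotence of \<open>S2\<close>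
  and condition (iv), which the argument does not need.\<close>

locale half_quantum_setting =
  fixes n :: nat and q :: complex and R F Fi S2 A2 :: "complex op"
    and \<iota> :: "complex \<Rightarrow> 'a::ring_1" and M :: "'a op"
  assumes alg_add: "\<forall>a b. \<iota> (a + b) = \<iota> a + \<iota> b"
    and alg_mult: "\<forall>a b. \<iota> (a * b) = \<iota> a * \<iota> b"
    and alg_one: "\<iota> 1 = 1"
    and alg_central: "\<forall>a x. \<iota> a * x = x * \<iota> a"
    and q_nz: "q \<noteq> 0"
    and F_inv1: "meq n 2 (mmul n 2 F Fi) idm"
    and F_inv2: "meq n 2 (mmul n 2 Fi F) idm"
    and i1: "meq n 3 (mmul n 3 (mmul n 3 (lift 0 2 R) (lift 1 2 R)) (lift 0 2 R))
                     (mmul n 3 (mmul n 3 (lift 1 2 R) (lift 0 2 R)) (lift 1 2 R))"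
    and i2: "meq n 3 (mmul n 3 (mmul n 3 (lift 0 2 F) (lift 1 2 F)) (lift 0 2 F))
                     (mmul n 3 (mmul n 3 (lift 1 2 F) (lift 0 2 F)) (lift 1 2 F))"
    and i3: "meq n 3 (mmul n 3 (mmul n 3 (lift 0 2 R) (lift 1 2 F)) (lift 0 2 F))
                     (mmul n 3 (mmul n 3 (lift 1 2 F) (lift 0 2 F)) (lift 1 2 R))"
    and i4: "meq n 3 (mmul n 3 (mmul n 3 (lift 0 2 F) (lift 1 2 F)) (lift 0 2 R))
                     (mmul n 3 (mmul n 3 (lift 1 2 R) (lift 0 2 F)) (lift 1 2 F))"
    and ii_adm: "qadm q 2"
    and ii_A: "meq n 2 (mmul n 2 A2 A2) A2"
    and ii_sum: "meq n 2 (\<lambda>r c. S2 r c + A2 r c) idm"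
    and ii_R: "meq n 2 R (\<lambda>r c. q * S2 r c - inverse q * A2 r c)"
    and half_quantum:
      "meq n 2 (mmul n 2 (mmul n 2 (mmul n 2 (cmap \<iota> S2) (Mbar n 2 \<iota> F Fi M 1))
                                  (Mbar n 2 \<iota> F Fi M 2)) (cmap \<iota> A2)) (\<lambda>_ _. 0)"
begin

abbreviation emb :: "complex op \<Rightarrow> 'a op" where
  "emb \<equiv> cmap \<iota>"

abbreviation c2 :: complex where
  "c2 \<equiv> q + inverse q"

lemma scalar_hom: "scalar_hom \<iota>"
  unfolding scalar_hom_def using alg_add alg_mult alg_one by blast

lemma c2_nz: "c2 \<noteq> 0"
  using ii_adm qnum_2[OF q_nz] qadm_qnum_nonzero[of q 2 2] by simp

lemma oprod_emb_scale_right: "oprod n m X (op_scale (\<iota> a) Y) = op_scale (\<iota> a) (oprod n m X Y)"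
  by (rule oprod_scale_right) (simp add: alg_central)

lemmas oprod_distribs = oprod_scale_left oprod_scale_right_comm oprod_diff_left oprod_diff_right
  oprod_add_left oprod_add_right

lemmas oprod_emb_distribs = oprod_scale_left oprod_emb_scale_right oprod_diff_left oprod_diff_right
  oprod_add_left oprod_add_right

lemmas emb_simps = cmap_oprod[OF scalar_hom] cmap_restr[OF scalar_hom] cmap_lift[OF scalar_hom]
  cmap_idm[OF scalar_hom] cmap_add[OF scalar_hom] cmap_diff[OF scalar_hom] cmap_scale[OF scalar_hom]

text \<open>Positions are counted from 0: \<open>R_at m j\<close> is \<open>R\<^sub>j\<^sub>+\<^sub>1\<close> acting on \<open>V\<^sup>\<otimes>\<^sup>m\<close>, i.e. in the tensor
  factors \<open>j+1, j+2\<close>, and similarly for the other operators.\<close>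

definition Id_at :: "nat \<Rightarrow> complex op" where "Id_at m = restr n m idm"
definition R_at :: "nat \<Rightarrow> nat \<Rightarrow> complex op" where "R_at m j = restr n m (lift j 2 R)"
definition A_at :: "nat \<Rightarrow> nat \<Rightarrow> complex op" where "A_at m j = restr n m (lift j 2 A2)"
definition S_at :: "nat \<Rightarrow> nat \<Rightarrow> complex op" where "S_at m j = restr n m (lift j 2 S2)"
definition F_at :: "nat \<Rightarrow> nat \<Rightarrow> complex op" where "F_at m j = restr n m (lift j 2 F)"
definition Fi_at :: "nat \<Rightarrow> nat \<Rightarrow> complex op" where "Fi_at m j = restr n m (lift j 2 Fi)"

lemmas at_defs = Id_at_def R_at_def A_at_def S_at_def F_at_def Fi_at_def

lemma restr_at [simp]:
  "restr n m (Id_at m) = Id_at m" "restr n m (R_at m j) = R_at m j" "restr n m (A_at m j) = A_at m j"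
  "restr n m (S_at m j) = S_at m j" "restr n m (F_at m j) = F_at m j" "restr n m (Fi_at m j) = Fi_at m j"
  by (simp_all add: at_defs)

lemma oprod_Id_at [simp]:
  "oprod n m (Id_at m) X = restr n m X" "oprod n m X (Id_at m) = restr n m (X::complex op)"
  by (simp_all add: Id_at_def)

lemma emb_Id_at: "emb (Id_at m) = restr n m idm"
  by (simp add: Id_at_def emb_simps)

lemma F_at_inverse:
  assumes "j + 2 \<le> m"
  shows "oprod n m (F_at m j) (Fi_at m j) = Id_at m" "oprod n m (Fi_at m j) (F_at m j) = Id_at m"
proof -
  have "oprod n 2 F Fi = restr n 2 idm" "oprod n 2 Fi F = restr n 2 idm"
    using F_inv1 F_inv2 by (simp_all add: meq_iff_restr_eq)
  from oprod_lift_eq[OF this(1) assms] oprod_lift_eq[OF this(2) assms]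
  show "oprod n m (F_at m j) (Fi_at m j) = Id_at m" "oprod n m (Fi_at m j) (F_at m j) = Id_at m"
    by (simp_all add: at_defs)
qed

lemma three_factor_relation_at:
  assumes "meq n 3 (mmul n 3 (mmul n 3 (lift 0 2 X) (lift 1 2 Y)) (lift 0 2 Z))
                   (mmul n 3 (mmul n 3 (lift 1 2 X') (lift 0 2 Y')) (lift 1 2 Z'))"
    and "j + 3 \<le> m"
  shows "oprod n m (oprod n m (restr n m (lift j 2 X)) (restr n m (lift (j+1) 2 Y))) (restr n m (lift j 2 Z)) =
         oprod n m (oprod n m (restr n m (lift (j+1) 2 X')) (restr n m (lift j 2 Y'))) (restr n m (lift (j+1) 2 Z'))"
  using three_factor_relation_lift[OF _ assms(2)] assms(1) by (simp add: meq_iff_restr_eq)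

lemma R_at_braid: "j + 3 \<le> m \<Longrightarrow>
  oprod n m (oprod n m (R_at m j) (R_at m (j+1))) (R_at m j) = oprod n m (oprod n m (R_at m (j+1)) (R_at m j)) (R_at m (j+1))"
  unfolding at_defs by (rule three_factor_relation_at[OF i1])

lemma F_at_braid: "j + 3 \<le> m \<Longrightarrow>
  oprod n m (oprod n m (F_at m j) (F_at m (j+1))) (F_at m j) = oprod n m (oprod n m (F_at m (j+1)) (F_at m j)) (F_at m (j+1))"
  unfolding at_defs by (rule three_factor_relation_at[OF i2])

lemma R_F_F_exchange: "j + 3 \<le> m \<Longrightarrow>
  oprod n m (oprod n m (R_at m j) (F_at m (j+1))) (F_at m j) = oprod n m (oprod n m (F_at m (j+1)) (F_at m j)) (R_at m (j+1))"
  unfolding at_defs by (rule three_factor_relation_at[OF i3])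

lemma F_F_R_exchange: "j + 3 \<le> m \<Longrightarrow>
  oprod n m (oprod n m (F_at m j) (F_at m (j+1))) (R_at m j) = oprod n m (oprod n m (R_at m (j+1)) (F_at m j)) (F_at m (j+1))"
  unfolding at_defs by (rule three_factor_relation_at[OF i4])

lemma A_at_idem: "j + 2 \<le> m \<Longrightarrow> oprod n m (A_at m j) (A_at m j) = A_at m j"
  using oprod_lift_eq[of n 2 A2 A2 A2 j m] ii_A by (simp add: A_at_def meq_iff_restr_eq)

lemma S_at_eq: "j + 2 \<le> m \<Longrightarrow> S_at m j = op_diff (Id_at m) (A_at m j)"
proof -
  assume j: "j + 2 \<le> m"
  have "restr n 2 S2 = restr n 2 (op_diff idm A2)"
    by (rule restr_cong) (use ii_sum in \<open>auto simp: meq_def algebra_simps op_apply\<close>)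
  from restr_lift_cong[OF j this] show ?thesis
    by (simp add: at_defs lift_diff restr_diff)
qed

lemma R_at_eq: "j + 2 \<le> m \<Longrightarrow> R_at m j = op_diff (op_scale q (Id_at m)) (op_scale c2 (A_at m j))"
proof -
  assume j: "j + 2 \<le> m"
  have "restr n 2 R = restr n 2 (op_diff (op_scale q idm) (op_scale c2 A2))"
  proof (rule restr_cong)
    fix r c assume "r \<in> tidx n 2" "c \<in> tidx n 2"
    then have "R r c = q * S2 r c - inverse q * A2 r c" "S2 r c = idm r c - A2 r c"
      using ii_R ii_sum by (auto simp: meq_def algebra_simps)
    then show "R r c = op_diff (op_scale q idm) (op_scale c2 A2) r c"
      by (simp add: algebra_simps op_apply)
  qed
  from restr_lift_cong[OF j this] show ?thesis
    by (simp add: at_defs lift_diff lift_scale restr_diff restr_scale)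
qed

lemma A_at_eq: "j + 2 \<le> m \<Longrightarrow> A_at m j = op_scale (inverse c2) (op_diff (op_scale q (Id_at m)) (R_at m j))"
  using c2_nz by (simp add: R_at_eq fun_eq_iff field_simps op_apply)

lemma S_at_eq_R: "j + 2 \<le> m \<Longrightarrow> S_at m j = op_scale (inverse c2) (op_add (op_scale (inverse q) (Id_at m)) (R_at m j))"
proof -
  assume j: "j + 2 \<le> m"
  have "inverse c2 * (inverse q * x + (q * x - c2 * y)) = x - y" for x y
  proof -
    have "inverse q * x + (q * x - c2 * y) = c2 * (x - y)" by (simp add: algebra_simps)
    then show ?thesis using c2_nz by simp
  qed
  then show ?thesis by (simp add: S_at_eq[OF j] R_at_eq[OF j] fun_eq_iff op_apply)
qed

lemma R_at_eq_S: "j + 2 \<le> m \<Longrightarrow> R_at m j = op_diff (op_scale c2 (S_at m j)) (op_scale (inverse q) (Id_at m))"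
  by (simp add: R_at_eq S_at_eq fun_eq_iff algebra_simps op_apply)

lemma R_at_hecke: "j + 2 \<le> m \<Longrightarrow> oprod n m (R_at m j) (R_at m j) = op_add (op_scale (q - inverse q) (R_at m j)) (Id_at m)"
  using q_nz by (simp add: R_at_eq oprod_distribs A_at_idem fun_eq_iff field_simps op_apply)

lemma A_F_F_exchange: "j + 3 \<le> m \<Longrightarrow>
  oprod n m (oprod n m (A_at m j) (F_at m (j+1))) (F_at m j) = oprod n m (oprod n m (F_at m (j+1)) (F_at m j)) (A_at m (j+1))"
  using A_at_eq[of j m] A_at_eq[of "j+1" m] R_F_F_exchange[of j m] by (simp add: oprod_distribs)

lemma S_F_F_exchange: "j + 3 \<le> m \<Longrightarrow>
  oprod n m (oprod n m (S_at m j) (F_at m (j+1))) (F_at m j) = oprod n m (oprod n m (F_at m (j+1)) (F_at m j)) (S_at m (j+1))"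
  using S_at_eq_R[of j m] S_at_eq_R[of "j+1" m] R_F_F_exchange[of j m] by (simp add: oprod_distribs)

lemma F_F_A_exchange: "j + 3 \<le> m \<Longrightarrow>
  oprod n m (oprod n m (F_at m j) (F_at m (j+1))) (A_at m j) = oprod n m (oprod n m (A_at m (j+1)) (F_at m j)) (F_at m (j+1))"
  using A_at_eq[of j m] A_at_eq[of "j+1" m] F_F_R_exchange[of j m] by (simp add: oprod_distribs)

lemma F_F_S_exchange: "j + 3 \<le> m \<Longrightarrow>
  oprod n m (oprod n m (F_at m j) (F_at m (j+1))) (S_at m j) = oprod n m (oprod n m (S_at m (j+1)) (F_at m j)) (F_at m (j+1))"
  using S_at_eq_R[of j m] S_at_eq_R[of "j+1" m] F_F_R_exchange[of j m] by (simp add: oprod_distribs)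

section \<open>The operators \<open>M\<^sub>k\<close> and the half-quantum relation at every position\<close>

definition Mbar_at :: "nat \<Rightarrow> nat \<Rightarrow> 'a op" where
  "Mbar_at m l = restr n m (Mbar n m \<iota> F Fi M l)"

lemma restr_Mbar_at [simp]: "restr n m (Mbar_at m l) = Mbar_at m l"
  by (simp add: Mbar_at_def)

lemma restr_emb_restr [simp]: "restr n m (emb (restr n m X)) = emb (restr n m X)"
  by (simp add: emb_simps)

lemma Mbar_at_Suc_Suc:
  "Mbar_at m (Suc (Suc k)) = oprod n m (oprod n m (emb (F_at m k)) (Mbar_at m (Suc k))) (emb (Fi_at m k))"
  by (simp add: Mbar_at_def at_defs emb_simps)

lemma Mbar_at_Suc_Suc_commute:
  assumes "oprod n m Z (emb (F_at m k)) = oprod n m (emb (F_at m k)) Z"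
    and "oprod n m Z (emb (Fi_at m k)) = oprod n m (emb (Fi_at m k)) Z"
    and "oprod n m Z (Mbar_at m (Suc k)) = oprod n m (Mbar_at m (Suc k)) Z"
  shows "oprod n m Z (Mbar_at m (Suc (Suc k))) = oprod n m (Mbar_at m (Suc (Suc k))) Z"
  unfolding Mbar_at_Suc_Suc by (intro oprod_commute_oprod assms)

lemma lift_emb_commute:
  assumes "j + k \<le> m" "p + 2 \<le> m" "j + k \<le> p \<or> p + 2 \<le> j"
  shows "oprod n m (lift j k X) (emb (restr n m (lift p 2 Z))) = oprod n m (emb (restr n m (lift p 2 Z))) (lift j k X)"
  unfolding emb_simps oprod_restr_left oprod_restr_right
  by (rule oprod_lift_commute) (use assms alg_central in \<open>auto simp: cmap_def\<close>)

lemma emb_emb_commute: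
  assumes "j + 2 \<le> m" "p + 2 \<le> m" "j + 2 \<le> p \<or> p + 2 \<le> j"
  shows "oprod n m (emb (restr n m (lift j 2 Z'))) (emb (restr n m (lift p 2 Z))) =
         oprod n m (emb (restr n m (lift p 2 Z))) (emb (restr n m (lift j 2 Z')))"
  using lift_emb_commute[OF assms, of "emb Z'" Z] by (simp add: emb_simps)

text \<open>\<open>M\<^sub>l\<close> only involves the first \<open>l\<close> tensor factors.\<close>

lemma Mbar_at_commute_later:
  "1 \<le> l \<Longrightarrow> l \<le> p \<Longrightarrow> p + 2 \<le> m \<Longrightarrow>
   oprod n m (emb (restr n m (lift p 2 Z))) (Mbar_at m l) = oprod n m (Mbar_at m l) (emb (restr n m (lift p 2 Z)))"
proof (induction l rule: nat_induct_at_least)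
  case base
  then show ?case using lift_emb_commute[of 0 1 m p M Z] by (simp add: Mbar_at_def)
next
  case (Suc l)
  then obtain k where k: "l = Suc k" by (cases l) auto
  show ?case
    unfolding k
    by (rule Mbar_at_Suc_Suc_commute)
      (use Suc k emb_emb_commute[of k m p] in \<open>simp_all add: at_defs\<close>)
qed

lemma F_pair_inverse:
  assumes "p + 3 \<le> m"
  shows "oprod n m (oprod n m (emb (F_at m (p+1))) (emb (F_at m p))) (oprod n m (emb (Fi_at m p)) (emb (Fi_at m (p+1)))) = restr n m idm"
    and "oprod n m (oprod n m (emb (Fi_at m p)) (emb (Fi_at m (p+1)))) (oprod n m (emb (F_at m (p+1))) (emb (F_at m p))) = restr n m idm"
proof -
  have "oprod n m (oprod n m (F_at m (p+1)) (F_at m p)) (oprod n m (Fi_at m p) (Fi_at m (p+1))) = Id_at m"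
    "oprod n m (oprod n m (Fi_at m p) (Fi_at m (p+1))) (oprod n m (F_at m (p+1)) (F_at m p)) = Id_at m"
    using assms F_at_inverse[of p m] F_at_inverse[of "Suc p" m]
    by (simp_all add: oprod_assoc oprod_assoc_subst)
  then show "oprod n m (oprod n m (emb (F_at m (p+1))) (emb (F_at m p))) (oprod n m (emb (Fi_at m p)) (emb (Fi_at m (p+1)))) = restr n m idm"
    "oprod n m (oprod n m (emb (Fi_at m p)) (emb (Fi_at m (p+1)))) (oprod n m (emb (F_at m (p+1))) (emb (F_at m p))) = restr n m idm"
    by (metis emb_Id_at cmap_oprod[OF scalar_hom])+
qed

lemma Mbar_at_shift:
  "p + 3 \<le> m \<Longrightarrow> Mbar_at m (p+3) =
     oprod n m (oprod n m (oprod n m (emb (F_at m (p+1))) (emb (F_at m p))) (Mbar_at m (p+1)))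
       (oprod n m (emb (Fi_at m p)) (emb (Fi_at m (p+1))))"
  using Mbar_at_Suc_Suc[of m "p+1"] Mbar_at_Suc_Suc[of m p] by (simp add: numeral_3_eq_3 oprod_assoc)

text \<open>An operator on factors \<open>p+1, p+2\<close> with \<open>l \<ge> p+3\<close> commutes with \<open>M\<^sub>l\<close> as soon as it
  satisfies the exchange relation (i) with \<open>F\<close>: conjugation by \<open>F\<^sub>p\<^sub>+\<^sub>1F\<^sub>p\<close> moves it one factor to
  the right, past \<open>M\<^sub>p\<^sub>+\<^sub>1\<close>.\<close>

lemma Mbar_at_commute_earlier:
  assumes exchange: "oprod n m (oprod n m (restr n m (lift p 2 Z)) (F_at m (p+1))) (F_at m p) =
                     oprod n m (oprod n m (F_at m (p+1)) (F_at m p)) (restr n m (lift (p+1) 2 Z))"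
    and l: "p + 3 \<le> l" "l \<le> m"
  shows "oprod n m (emb (restr n m (lift p 2 Z))) (Mbar_at m l) = oprod n m (Mbar_at m l) (emb (restr n m (lift p 2 Z)))"
  using l
proof (induction l rule: nat_induct_at_least)
  case base
  have "oprod n m (emb (restr n m (lift p 2 Z))) (oprod n m (emb (F_at m (p+1))) (emb (F_at m p))) =
        oprod n m (oprod n m (emb (F_at m (p+1))) (emb (F_at m p))) (emb (restr n m (lift (p+1) 2 Z)))"
    using arg_cong[OF exchange, of emb] by (simp add: emb_simps oprod_assoc)
  moreover have "oprod n m (emb (restr n m (lift (p+1) 2 Z))) (Mbar_at m (p+1)) =
                 oprod n m (Mbar_at m (p+1)) (emb (restr n m (lift (p+1) 2 Z)))"
    by (rule Mbar_at_commute_later) (use base in auto)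
  ultimately show ?case
    unfolding Mbar_at_shift[OF base]
    by (rule oprod_conj_commute[OF _ _ F_pair_inverse[OF base]]) simp
next
  case (Suc l)
  then obtain k where k: "l = Suc k" by (cases l) auto
  show ?case
    unfolding k
    by (rule Mbar_at_Suc_Suc_commute)
      (use Suc k emb_emb_commute[of p m k] in \<open>simp_all add: at_defs\<close>)
qed

lemma A_at_Mbar_at_commute: "p + 3 \<le> l \<Longrightarrow> l \<le> m \<Longrightarrow>
  oprod n m (emb (A_at m p)) (Mbar_at m l) = oprod n m (Mbar_at m l) (emb (A_at m p))"
  unfolding A_at_def by (rule Mbar_at_commute_earlier) (use A_F_F_exchange[of p m] in \<open>simp_all add: A_at_def\<close>)

lemma S_at_Mbar_at_commute: "p + 3 \<le> l \<Longrightarrow> l \<le> m \<Longrightarrow>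
  oprod n m (emb (S_at m p)) (Mbar_at m l) = oprod n m (Mbar_at m l) (emb (S_at m p))"
  unfolding S_at_def by (rule Mbar_at_commute_earlier) (use S_F_F_exchange[of p m] in \<open>simp_all add: S_at_def\<close>)

lemma Fi_at_Mbar_at_commute:
  assumes "p + 3 \<le> l" "l \<le> m"
  shows "oprod n m (emb (Fi_at m p)) (Mbar_at m l) = oprod n m (Mbar_at m l) (emb (Fi_at m p))"
proof -
  have "oprod n m (Mbar_at m l) (emb (F_at m p)) = oprod n m (emb (F_at m p)) (Mbar_at m l)"
    unfolding F_at_def
    by (rule Mbar_at_commute_earlier[symmetric]) (use F_at_braid[of p m] assms in \<open>simp_all add: F_at_def\<close>)
  moreover have "oprod n m (emb (F_at m p)) (emb (Fi_at m p)) = restr n m idm"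
    "oprod n m (emb (Fi_at m p)) (emb (F_at m p)) = restr n m idm"
    using assms by (simp_all flip: cmap_oprod[OF scalar_hom] add: F_at_inverse emb_Id_at)
  ultimately show ?thesis by (metis intertwine_inverse restr_Mbar_at)
qed

lemma restr_lift_Mbar:
  "l \<le> k \<Longrightarrow> k \<le> m \<Longrightarrow> restr n m (lift 0 k (Mbar n k \<iota> F Fi M l)) = Mbar_at m l"
proof (induction l)
  case 0
  then show ?case by (simp add: Mbar_at_def)
next
  case (Suc l)
  show ?case
  proof (cases l)
    case 0
    then show ?thesis using Suc.prems restr_lift_lift[of 0 1 k 0 m n M] by (simp add: Mbar_at_def)
  next
    case (Suc j)
    have emb_lift: "restr n m (lift 0 k (emb (lift j 2 Z))) = emb (restr n m (lift j 2 Z))" for Z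
      using \<open>Suc l \<le> k\<close> \<open>k \<le> m\<close> Suc restr_lift_lift[of j 2 k 0 m n "emb Z"] by (simp add: emb_simps)
    have IH: "restr n m (lift 0 k (Mbar n k \<iota> F Fi M (Suc j))) = Mbar_at m (Suc j)"
      using Suc.IH Suc.prems Suc by simp
    have "restr n m (lift 0 k (Mbar n k \<iota> F Fi M (Suc (Suc j)))) =
          oprod n m (oprod n m (restr n m (lift 0 k (emb (lift j 2 F)))) (restr n m (lift 0 k (Mbar n k \<iota> F Fi M (Suc j)))))
            (restr n m (lift 0 k (emb (lift j 2 Fi))))"
      using Suc.prems by (simp add: restr_lift_mmul3)
    also have "\<dots> = Mbar_at m (Suc (Suc j))"
      unfolding emb_lift IH using Suc.prems Suc by (simp add: Mbar_at_Suc_Suc at_defs)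
    finally show ?thesis using Suc by simp
  qed
qed

lemma half_quantum_at_0:
  assumes "2 \<le> m"
  shows "oprod n m (oprod n m (oprod n m (emb (S_at m 0)) (Mbar_at m 1)) (Mbar_at m 2)) (emb (A_at m 0)) = (\<lambda>_ _. 0)"
proof -
  have "oprod n 2 (oprod n 2 (oprod n 2 (emb S2) (Mbar n 2 \<iota> F Fi M 1)) (Mbar n 2 \<iota> F Fi M 2)) (emb A2) = (\<lambda>_ _. 0)"
    using half_quantum by (simp add: meq_iff_restr_eq)
  then have "restr n m (lift 0 2 (oprod n 2 (oprod n 2 (oprod n 2 (emb S2) (Mbar n 2 \<iota> F Fi M 1))
      (Mbar n 2 \<iota> F Fi M 2)) (emb A2))) = (\<lambda>_ _. 0)"
    by simp
  then show ?thesis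
    using assms by (simp only: restr_lift_oprod restr_lift_Mbar emb_simps at_defs)
qed

lemma Mbar_at_pair_shift:
  assumes m: "j + 3 \<le> m"
  shows "oprod n m (Mbar_at m (Suc (Suc j))) (Mbar_at m (Suc (Suc (Suc j)))) =
    oprod n m (oprod n m (oprod n m (emb (F_at m j)) (emb (F_at m (Suc j))))
        (oprod n m (Mbar_at m (Suc j)) (Mbar_at m (Suc (Suc j)))))
      (oprod n m (emb (Fi_at m (Suc j))) (emb (Fi_at m j)))"
    (is "_ = oprod n m (oprod n m (oprod n m ?F ?F') (oprod n m ?M1 ?M2)) (oprod n m ?Fi' ?Fi)")
proof -
  have F'_M1: "oprod n m ?F' ?M1 = oprod n m ?M1 ?F'"
    unfolding F_at_def by (rule Mbar_at_commute_later) (use m in auto)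
  have Fi_M3: "oprod n m (Mbar_at m (Suc (Suc (Suc j)))) ?Fi = oprod n m ?Fi (Mbar_at m (Suc (Suc (Suc j))))"
    using Fi_at_Mbar_at_commute[of j "Suc (Suc (Suc j))" m] m by simp
  have "oprod n m (oprod n m (oprod n m ?F ?F') (oprod n m ?M1 ?M2)) (oprod n m ?Fi' ?Fi) =
        oprod n m ?F (oprod n m (oprod n m ?F' ?M1) (oprod n m ?M2 (oprod n m ?Fi' ?Fi)))"
    by (simp only: oprod_assoc)
  also have "\<dots> = oprod n m ?F (oprod n m ?M1 (oprod n m (oprod n m (oprod n m ?F' ?M2) ?Fi') ?Fi))"
    unfolding F'_M1 by (simp only: oprod_assoc)
  also have "\<dots> = oprod n m ?F (oprod n m ?M1 (oprod n m (Mbar_at m (Suc (Suc (Suc j)))) ?Fi))"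
    by (simp only: Mbar_at_Suc_Suc[of m "Suc j"])
  also have "\<dots> = oprod n m (oprod n m (oprod n m ?F ?M1) ?Fi) (Mbar_at m (Suc (Suc (Suc j))))"
    unfolding Fi_M3 by (simp only: oprod_assoc)
  finally show ?thesis by (simp only: Mbar_at_Suc_Suc[of m j])
qed

lemma half_quantum_at:
  "j + 2 \<le> m \<Longrightarrow>
   oprod n m (oprod n m (oprod n m (emb (S_at m j)) (Mbar_at m (Suc j))) (Mbar_at m (Suc (Suc j)))) (emb (A_at m j)) =
   (\<lambda>_ _. 0)"
proof (induction j)
  case 0
  then show ?case using half_quantum_at_0[of m] by (simp add: numeral_2_eq_2)
next
  case (Suc j)
  have m: "j + 3 \<le> m" using Suc.prems by simp
  define G where "G = oprod n m (emb (F_at m j)) (emb (F_at m (Suc j)))"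
  define Gi where "Gi = oprod n m (emb (Fi_at m (Suc j))) (emb (Fi_at m j))"
  have G_inv: "oprod n m G Gi = restr n m idm" "oprod n m Gi G = restr n m idm"
  proof -
    have "oprod n m (oprod n m (F_at m j) (F_at m (Suc j))) (oprod n m (Fi_at m (Suc j)) (Fi_at m j)) = Id_at m"
      "oprod n m (oprod n m (Fi_at m (Suc j)) (Fi_at m j)) (oprod n m (F_at m j) (F_at m (Suc j))) = Id_at m"
      using m F_at_inverse[of j m] F_at_inverse[of "Suc j" m]
      by (simp_all add: oprod_assoc oprod_assoc_subst)
    then show "oprod n m G Gi = restr n m idm" "oprod n m Gi G = restr n m idm"
      unfolding G_def Gi_def by (simp_all flip: cmap_oprod[OF scalar_hom] add: emb_Id_at)
  qed
  have S_G: "oprod n m (emb (S_at m (Suc j))) G = oprod n m G (emb (S_at m j))"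
    using arg_cong[OF F_F_S_exchange[OF m], of emb] unfolding G_def
    by (simp add: emb_simps oprod_assoc)
  have A_G: "oprod n m (emb (A_at m (Suc j))) G = oprod n m G (emb (A_at m j))"
    using arg_cong[OF F_F_A_exchange[OF m], of emb] unfolding G_def
    by (simp add: emb_simps oprod_assoc)
  have Gi_A: "oprod n m Gi (emb (A_at m (Suc j))) = oprod n m (emb (A_at m j)) Gi"
    by (rule intertwine_inverse[OF A_G G_inv, symmetric]) (simp add: A_at_def emb_simps)
  have "oprod n m (oprod n m (oprod n m (emb (S_at m (Suc j))) (Mbar_at m (Suc (Suc j)))) (Mbar_at m (Suc (Suc (Suc j))))) (emb (A_at m (Suc j))) =
    oprod n m (oprod n m (emb (S_at m (Suc j))) G)
      (oprod n m (oprod n m (Mbar_at m (Suc j)) (Mbar_at m (Suc (Suc j)))) (oprod n m Gi (emb (A_at m (Suc j)))))"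
    using Mbar_at_pair_shift[OF m] unfolding G_def Gi_def by (simp add: oprod_assoc)
  also have "\<dots> = oprod n m G (oprod n m (oprod n m (oprod n m (oprod n m (emb (S_at m j)) (Mbar_at m (Suc j)))
      (Mbar_at m (Suc (Suc j)))) (emb (A_at m j))) Gi)"
    unfolding S_G Gi_A by (simp add: oprod_assoc)
  also have "\<dots> = (\<lambda>_ _. 0)"
    using Suc.IH m by simp
  finally show ?case .
qed

section \<open>The \<open>q\<close>-antisymmetrizers and \<open>q\<close>-symmetrizers\<close>

definition Asym_at :: "nat \<Rightarrow> nat \<Rightarrow> nat \<Rightarrow> complex op" where
  "Asym_at m i k = restr n m (lift i k (qA n q R k))"

definition Ssym_at :: "nat \<Rightarrow> nat \<Rightarrow> nat \<Rightarrow> complex op" where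
  "Ssym_at m i k = restr n m (lift i k (qS n q R k))"

lemma restr_Asym_at [simp]: "restr n m (Asym_at m i k) = Asym_at m i k"
  by (simp add: Asym_at_def)

lemma restr_Ssym_at [simp]: "restr n m (Ssym_at m i k) = Ssym_at m i k"
  by (simp add: Ssym_at_def)

lemma Asym_at_Suc_Suc: "i + Suc (Suc k) \<le> m \<Longrightarrow> Asym_at m i (Suc (Suc k)) =
  op_scale (inverse (qnum q (Suc (Suc k)))) (oprod n m (oprod n m (Asym_at m i (Suc k))
     (op_diff (op_scale (q ^ Suc k) (Id_at m)) (op_scale (qnum q (Suc k)) (R_at m (i + k))))) (Asym_at m i (Suc k)))"
proof -
  assume h: "i + Suc (Suc k) \<le> m"
  define B where "B = lift 0 (Suc k) (qA n q R (Suc k))"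
  define W where "W = (\<lambda>r c. q ^ Suc k * idm r c - qnum q (Suc k) * lift k 2 R r c)"
  have q1: "qA n q R (Suc (Suc k)) = op_scale (inverse (qnum q (Suc (Suc k))))
      (mmul n (Suc (Suc k)) (mmul n (Suc (Suc k)) B W) B)"
    by (simp add: B_def W_def Let_def fun_eq_iff field_simps op_scale_apply)
  have eB: "restr n m (lift i (Suc (Suc k)) B) = Asym_at m i (Suc k)"
    unfolding B_def Asym_at_def using restr_lift_lift[of 0 "Suc k" "Suc (Suc k)" i m n] h by simp
  have eW: "restr n m (lift i (Suc (Suc k)) W) =
      op_diff (op_scale (q ^ Suc k) (Id_at m)) (op_scale (qnum q (Suc k)) (R_at m (i + k)))"
  proof -
    have "W = op_diff (op_scale (q ^ Suc k) idm) (op_scale (qnum q (Suc k)) (lift k 2 R))"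
      by (simp add: W_def fun_eq_iff op_apply)
    hence "restr n m (lift i (Suc (Suc k)) W) = op_diff (op_scale (q ^ Suc k) (restr n m idm))
        (op_scale (qnum q (Suc k)) (restr n m (lift i (Suc (Suc k)) (lift k 2 R))))"
      by (simp add: lift_diff lift_scale restr_diff restr_scale)
    also have "restr n m (lift i (Suc (Suc k)) (lift k 2 R)) = R_at m (i + k)"
      unfolding R_at_def using restr_lift_lift[of k 2 "Suc (Suc k)" i m n R] h by simp
    finally show ?thesis unfolding Id_at_def .
  qed
  show ?thesis
    unfolding Asym_at_def q1 lift_scale restr_scale restr_lift_mmul3[OF h] eB[unfolded Asym_at_def] eW[symmetric] ..
qed

lemma Ssym_at_Suc_Suc: "i + Suc (Suc k) \<le> m \<Longrightarrow> Ssym_at m i (Suc (Suc k)) =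
  op_scale (inverse (qnum q (Suc (Suc k)))) (oprod n m (oprod n m (Ssym_at m i (Suc k))
     (op_add (op_scale (q powi (- int (Suc k))) (Id_at m)) (op_scale (qnum q (Suc k)) (R_at m (i + k))))) (Ssym_at m i (Suc k)))"
proof -
  assume h: "i + Suc (Suc k) \<le> m"
  define B where "B = lift 0 (Suc k) (qS n q R (Suc k))"
  define W where "W = (\<lambda>r c. q powi (- int (Suc k)) * idm r c + qnum q (Suc k) * lift k 2 R r c)"
  have q1: "qS n q R (Suc (Suc k)) = op_scale (inverse (qnum q (Suc (Suc k))))
      (mmul n (Suc (Suc k)) (mmul n (Suc (Suc k)) B W) B)"
    by (simp add: B_def W_def Let_def fun_eq_iff field_simps op_scale_apply)
  have eB: "restr n m (lift i (Suc (Suc k)) B) = Ssym_at m i (Suc k)"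
    unfolding B_def Ssym_at_def using restr_lift_lift[of 0 "Suc k" "Suc (Suc k)" i m n] h by simp
  have eW: "restr n m (lift i (Suc (Suc k)) W) =
      op_add (op_scale (q powi (- int (Suc k))) (Id_at m)) (op_scale (qnum q (Suc k)) (R_at m (i + k)))"
  proof -
    have "W = op_add (op_scale (q powi (- int (Suc k))) idm) (op_scale (qnum q (Suc k)) (lift k 2 R))"
      by (simp add: W_def fun_eq_iff op_apply)
    hence "restr n m (lift i (Suc (Suc k)) W) = op_add (op_scale (q powi (- int (Suc k))) (restr n m idm))
        (op_scale (qnum q (Suc k)) (restr n m (lift i (Suc (Suc k)) (lift k 2 R))))"
      by (simp add: lift_add lift_scale restr_add restr_scale)
    also have "restr n m (lift i (Suc (Suc k)) (lift k 2 R)) = R_at m (i + k)"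
      unfolding R_at_def using restr_lift_lift[of k 2 "Suc (Suc k)" i m n R] h by simp
    finally show ?thesis unfolding Id_at_def .
  qed
  show ?thesis
    unfolding Ssym_at_def q1 lift_scale restr_scale restr_lift_mmul3[OF h] eB[unfolded Ssym_at_def] eW[symmetric] ..
qed

text \<open>The absorption lemmas are stated for an arbitrary central embedding \<open>\<kappa>\<close> of the scalars, so
  that they apply both to complex operators (\<open>\<kappa> = id\<close>) and to operators with entries in the
  algebra (\<open>\<kappa> = \<iota>\<close>).\<close>

lemma cmap_Asym_at_absorbs:
  fixes \<kappa> :: "complex \<Rightarrow> 'b::ring_1" and Y :: "'b op"
  assumes \<kappa>: "scalar_hom \<kappa>" "\<And>a x. \<kappa> a * x = x * \<kappa> a"
    and k: "1 \<le> k" "qadm q k" "i + k \<le> m"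
    and eigen: "\<And>j. j + 1 < k \<Longrightarrow>
      oprod n m (cmap \<kappa> (R_at m (i+j))) Y = op_scale (\<kappa> (- inverse q)) (restr n m Y)"
  shows "oprod n m (cmap \<kappa> (Asym_at m i k)) Y = restr n m Y"
  using k eigen
proof (induction k rule: nat_induct_at_least)
  case base
  then show ?case using \<kappa>(1) by (simp add: Asym_at_def cmap_restr cmap_idm)
next
  case (Suc k)
  then obtain k0 where k0: "k = Suc k0" by (cases k) auto
  have scale_right: "oprod n m Z (op_scale (\<kappa> a) X) = op_scale (\<kappa> a) (oprod n m Z X)" for Z X a
    by (rule oprod_scale_right) (rule \<kappa>(2))
  have IH: "oprod n m (cmap \<kappa> (Asym_at m i k)) Y = restr n m Y"
    using Suc.prems qadm_mono[OF Suc.prems(1)] by (intro Suc.IH) auto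
  have R: "oprod n m (cmap \<kappa> (R_at m (i + k0))) Y = op_scale (\<kappa> (- inverse q)) (restr n m Y)"
    using Suc.prems k0 by auto
  have "q ^ Suc k0 - qnum q (Suc k0) * - inverse q = qnum q (Suc (Suc k0))"
    using qnum_Suc_left[OF q_nz, of "Suc k0"] by (simp add: algebra_simps)
  then have "inverse (qnum q (Suc (Suc k0))) * (q ^ Suc k0 - qnum q (Suc k0) * - inverse q) = 1"
    using qadm_qnum_nonzero[OF Suc.prems(1), of "Suc (Suc k0)"] k0 by simp
  then have unit: "\<kappa> (inverse (qnum q (Suc (Suc k0)))) *
      (\<kappa> (q ^ Suc k0) * y - \<kappa> (qnum q (Suc k0)) * (\<kappa> (- inverse q) * y)) = y" for y
    using \<kappa>(1) by (metis (no_types, lifting) mult.assoc mult_1_left left_diff_distrib scalar_hom_1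
        scalar_hom_diff scalar_hom_mult)
  have "oprod n m (cmap \<kappa> (Asym_at m i (Suc k))) Y =
    op_scale (\<kappa> (inverse (qnum q (Suc (Suc k0)))))
      (op_diff (op_scale (\<kappa> (q ^ Suc k0)) (restr n m Y))
        (op_scale (\<kappa> (qnum q (Suc k0))) (op_scale (\<kappa> (- inverse q)) (restr n m Y))))"
    unfolding k0 Asym_at_Suc_Suc[OF Suc.prems(2)[unfolded k0]]
    using IH[unfolded k0] R \<kappa>(1)
    by (simp add: cmap_oprod cmap_diff cmap_scale cmap_restr cmap_idm Id_at_def oprod_assoc
        oprod_scale_left scale_right oprod_diff_left oprod_diff_right)
  also have "\<dots> = restr n m Y"
    by (intro ext) (simp only: op_apply unit)
  finally show ?case .
qed

lemma cmap_Ssym_at_absorbs: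
  fixes \<kappa> :: "complex \<Rightarrow> 'b::ring_1" and Y :: "'b op"
  assumes \<kappa>: "scalar_hom \<kappa>" "\<And>a x. \<kappa> a * x = x * \<kappa> a"
    and k: "1 \<le> k" "qadm q k" "i + k \<le> m"
    and eigen: "\<And>j. j + 1 < k \<Longrightarrow> oprod n m Y (cmap \<kappa> (R_at m (i+j))) = op_scale (\<kappa> q) (restr n m Y)"
  shows "oprod n m Y (cmap \<kappa> (Ssym_at m i k)) = restr n m Y"
  using k eigen
proof (induction k rule: nat_induct_at_least)
  case base
  then show ?case using \<kappa>(1) by (simp add: Ssym_at_def cmap_restr cmap_idm)
next
  case (Suc k)
  then obtain k0 where k0: "k = Suc k0" by (cases k) auto
  have scale_right: "oprod n m Z (op_scale (\<kappa> a) X) = op_scale (\<kappa> a) (oprod n m Z X)" for Z X a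
    by (rule oprod_scale_right) (rule \<kappa>(2))
  have IH: "oprod n m Y (cmap \<kappa> (Ssym_at m i k)) = restr n m Y"
    using Suc.prems qadm_mono[OF Suc.prems(1)] by (intro Suc.IH) auto
  have R: "oprod n m Y (cmap \<kappa> (R_at m (i + k0))) = op_scale (\<kappa> q) (restr n m Y)"
    using Suc.prems k0 by auto
  have "q powi (- int (Suc k0)) + qnum q (Suc k0) * q = qnum q (Suc (Suc k0))"
    using qnum_Suc_right[OF q_nz, of "Suc k0"] by (simp add: algebra_simps)
  then have "inverse (qnum q (Suc (Suc k0))) * (q powi (- int (Suc k0)) + qnum q (Suc k0) * q) = 1"
    using qadm_qnum_nonzero[OF Suc.prems(1), of "Suc (Suc k0)"] k0 by simp
  then have unit: "\<kappa> (inverse (qnum q (Suc (Suc k0)))) *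
      (\<kappa> (q powi (- int (Suc k0))) * y + \<kappa> (qnum q (Suc k0)) * (\<kappa> q * y)) = y" for y
    using \<kappa>(1) by (metis (no_types, lifting) mult.assoc mult_1_left distrib_right scalar_hom_1
        scalar_hom_add scalar_hom_mult)
  have "oprod n m Y (cmap \<kappa> (Ssym_at m i (Suc k))) =
    op_scale (\<kappa> (inverse (qnum q (Suc (Suc k0)))))
      (op_add (op_scale (\<kappa> (q powi (- int (Suc k0)))) (restr n m Y))
        (op_scale (\<kappa> (qnum q (Suc k0))) (op_scale (\<kappa> q) (restr n m Y))))"
    unfolding k0 Ssym_at_Suc_Suc[OF Suc.prems(2)[unfolded k0]]
    using IH[unfolded k0] R \<kappa>(1)
    by (simp add: cmap_oprod cmap_add cmap_scale cmap_restr cmap_idm Id_at_def oprod_assoc[symmetric]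
        oprod_scale_left scale_right oprod_add_left oprod_add_right)
  also have "\<dots> = restr n m Y"
    by (intro ext) (simp only: op_apply unit)
  finally show ?case .
qed

lemma Asym_at_R_at_commute:
  "i + k \<le> p \<Longrightarrow> p + 2 \<le> m \<Longrightarrow> oprod n m (Asym_at m i k) (R_at m p) = oprod n m (R_at m p) (Asym_at m i k)"
  unfolding Asym_at_def R_at_def oprod_restr_left oprod_restr_right
  by (rule oprod_lift_commute) (simp_all add: mult.commute)

lemma Ssym_at_R_at_commute:
  "i + k \<le> p \<Longrightarrow> p + 2 \<le> m \<Longrightarrow> oprod n m (Ssym_at m i k) (R_at m p) = oprod n m (R_at m p) (Ssym_at m i k)"
  unfolding Ssym_at_def R_at_def oprod_restr_left oprod_restr_right
  by (rule oprod_lift_commute) (simp_all add: mult.commute)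

lemma op_scale_op_scale_commute: "op_scale a (op_scale b X) = op_scale b (op_scale a (X::complex op))"
  by (simp add: fun_eq_iff op_scale_apply mult.left_commute)

text \<open>Two identities in the Hecke algebra generated by \<open>s\<close> and \<open>t\<close>, used for \<open>s = R\<^sub>i\<^sub>+\<^sub>k\<close> and
  \<open>t = R\<^sub>i\<^sub>+\<^sub>k\<^sub>-\<^sub>1\<close>: if \<open>t\<close> acts on \<open>a\<close> by its eigenvalue \<open>-q\<^sup>-\<^sup>1\<close> (resp. \<open>q\<close>), then so does
  \<open>s\<close> on the image of the next factor of the recursion for the (anti)symmetrizer.\<close>

lemma hecke_braid_annihilates_A:
  assumes ta: "oprod n m t a = op_scale (- inverse q) a"
    and braid: "oprod n m (oprod n m s t) s = oprod n m (oprod n m t s) t"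
    and hecke: "oprod n m s s = op_add (op_scale (q - inverse q) s) (Id_at m)"
    and K: "K = x + inverse q * L" and a: "restr n m a = a"
  shows "oprod n m (op_add s (op_scale (inverse q) (Id_at m)))
           (oprod n m (op_diff (op_scale x (Id_at m)) (op_scale L t))
             (oprod n m (op_diff (op_scale (q * x) (Id_at m)) (op_scale K s)) a)) = (\<lambda>_ _. 0)"
proof -
  have ssa: "oprod n m s (oprod n m s a) = op_add (op_scale (q - inverse q) (oprod n m s a)) a"
    using hecke a by (simp flip: oprod_assoc add: oprod_distribs)
  have stsa: "oprod n m s (oprod n m t (oprod n m s a)) = op_scale (- inverse q) (oprod n m t (oprod n m s a))"
  proof -
    have "oprod n m s (oprod n m t (oprod n m s a)) = oprod n m (oprod n m (oprod n m s t) s) a"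
      by (simp add: oprod_assoc)
    also have "\<dots> = oprod n m t (oprod n m s (oprod n m t a))"
      unfolding braid by (simp add: oprod_assoc)
    finally show ?thesis by (simp add: ta oprod_distribs)
  qed
  show ?thesis
    using q_nz
    by (simp add: oprod_distribs oprod_assoc ta ssa stsa a restr_diff restr_scale restr_add)
      (simp add: fun_eq_iff op_apply K field_simps)
qed

lemma hecke_braid_annihilates_S:
  assumes at: "oprod n m a t = op_scale q a"
    and braid: "oprod n m (oprod n m s t) s = oprod n m (oprod n m t s) t"
    and hecke: "oprod n m s s = op_add (op_scale (q - inverse q) s) (Id_at m)"
    and K: "K = x + q * L" and a: "restr n m a = a"
  shows "oprod n m (oprod n m (oprod n m a (op_add (op_scale (inverse q * x) (Id_at m)) (op_scale K s)))
           (op_add (op_scale x (Id_at m)) (op_scale L t))) (op_diff s (op_scale q (Id_at m))) = (\<lambda>_ _. 0)"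
proof -
  have ass: "oprod n m (oprod n m a s) s = op_add (op_scale (q - inverse q) (oprod n m a s)) a"
    using hecke a by (simp add: oprod_assoc oprod_distribs)
  have asts: "oprod n m (oprod n m (oprod n m a s) t) s = op_scale q (oprod n m (oprod n m a s) t)"
  proof -
    have "oprod n m (oprod n m (oprod n m a s) t) s = oprod n m (oprod n m (oprod n m a t) s) t"
      using braid by (simp add: oprod_assoc)
    then show ?thesis by (simp add: at oprod_distribs)
  qed
  show ?thesis
    using q_nz
    by (simp add: oprod_distribs oprod_assoc[symmetric] at ass asts a restr_diff restr_scale restr_add)
      (simp add: fun_eq_iff op_apply K field_simps)
qed

lemma R_eigen_extend_A:
  assumes ta: "oprod n m t a = op_scale (- inverse q) a"
    and braid: "oprod n m (oprod n m s t) s = oprod n m (oprod n m t s) t"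
    and hecke: "oprod n m s s = op_add (op_scale (q - inverse q) s) (Id_at m)"
    and ba: "oprod n m b a = a" and bs: "oprod n m b s = oprod n m s b"
    and a_eq: "a = op_scale (inverse K) (oprod n m (oprod n m b (op_diff (op_scale x (Id_at m)) (op_scale L t))) b)"
    and K: "K = x + inverse q * L" and a: "restr n m a = a" and b: "restr n m b = b"
  shows "oprod n m s (oprod n m (oprod n m a (op_diff (op_scale (q * x) (Id_at m)) (op_scale K s))) a)
       = op_scale (- inverse q) (oprod n m (oprod n m a (op_diff (op_scale (q * x) (Id_at m)) (op_scale K s))) a)"
proof -
  define W where "W = op_diff (op_scale (q * x) (Id_at m)) (op_scale K s)"
  define W' where "W' = op_diff (op_scale x (Id_at m)) (op_scale L t)"
  define P where "P = op_add s (op_scale (inverse q) (Id_at m))"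
  have PW'W: "oprod n m P (oprod n m W' (oprod n m W a)) = (\<lambda>_ _. 0)"
    unfolding P_def W'_def W_def by (rule hecke_braid_annihilates_A[OF ta braid hecke K a])
  have "oprod n m b W = oprod n m W b" unfolding W_def by (simp add: oprod_distribs bs b)
  then have bWa: "oprod n m b (oprod n m W a) = oprod n m W a" by (metis ba oprod_assoc)
  have bP: "oprod n m P b = oprod n m b P" unfolding P_def by (simp add: oprod_distribs bs b)
  have "oprod n m P (oprod n m a (oprod n m W a)) =
        op_scale (inverse K) (oprod n m P (oprod n m b (oprod n m W' (oprod n m b (oprod n m W a)))))"
    by (subst a_eq) (simp add: oprod_distribs oprod_assoc W'_def)
  also have "\<dots> = op_scale (inverse K) (oprod n m b (oprod n m P (oprod n m W' (oprod n m W a))))"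
    unfolding bWa by (simp add: bP flip: oprod_assoc)
  finally have "oprod n m P (oprod n m (oprod n m a W) a) = (\<lambda>_ _. 0)"
    unfolding PW'W by (simp add: oprod_assoc fun_eq_iff op_scale_apply)
  then show ?thesis
    unfolding P_def W_def[symmetric] by (simp add: oprod_distribs fun_eq_iff op_apply add_eq_0_iff)
qed

lemma R_eigen_extend_S:
  assumes at: "oprod n m a t = op_scale q a"
    and braid: "oprod n m (oprod n m s t) s = oprod n m (oprod n m t s) t"
    and hecke: "oprod n m s s = op_add (op_scale (q - inverse q) s) (Id_at m)"
    and ab: "oprod n m a b = a" and bs: "oprod n m b s = oprod n m s b"
    and a_eq: "a = op_scale (inverse K) (oprod n m (oprod n m b (op_add (op_scale x (Id_at m)) (op_scale L t))) b)"
    and K: "K = x + q * L" and a: "restr n m a = a" and b: "restr n m b = b"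
  shows "oprod n m (oprod n m (oprod n m a (op_add (op_scale (inverse q * x) (Id_at m)) (op_scale K s))) a) s
       = op_scale q (oprod n m (oprod n m a (op_add (op_scale (inverse q * x) (Id_at m)) (op_scale K s))) a)"
proof -
  define W where "W = op_add (op_scale (inverse q * x) (Id_at m)) (op_scale K s)"
  define W' where "W' = op_add (op_scale x (Id_at m)) (op_scale L t)"
  define P where "P = op_diff s (op_scale q (Id_at m))"
  have aWW'P: "oprod n m (oprod n m (oprod n m a W) W') P = (\<lambda>_ _. 0)"
    unfolding P_def W'_def W_def by (rule hecke_braid_annihilates_S[OF at braid hecke K a])
  have "oprod n m b W = oprod n m W b" unfolding W_def by (simp add: oprod_distribs bs b)
  then have aWb: "oprod n m (oprod n m a W) b = oprod n m a W" by (metis ab oprod_assoc)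
  have bP: "oprod n m P b = oprod n m b P" unfolding P_def by (simp add: oprod_distribs bs b)
  have "oprod n m (oprod n m (oprod n m a W) a) P =
        op_scale (inverse K) (oprod n m (oprod n m (oprod n m (oprod n m (oprod n m a W) b) W') b) P)"
    by (subst (2) a_eq) (simp add: oprod_distribs oprod_assoc W'_def)
  also have "\<dots> = op_scale (inverse K) (oprod n m (oprod n m (oprod n m (oprod n m a W) W') P) b)"
    unfolding aWb by (simp add: bP oprod_assoc)
  finally have "oprod n m (oprod n m (oprod n m a W) a) P = (\<lambda>_ _. 0)"
    unfolding aWW'P by (simp add: fun_eq_iff op_scale_apply)
  then show ?thesis
    unfolding P_def W_def[symmetric] by (simp add: oprod_distribs fun_eq_iff op_apply)
qed

lemma R_at_Asym_at_last:
  assumes k: "qadm q (Suc (Suc k))" "i + Suc (Suc k) \<le> m"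
    and below: "\<And>j. j + 1 < Suc k \<Longrightarrow>
      oprod n m (R_at m (i+j)) (Asym_at m i (Suc k)) = op_scale (- inverse q) (Asym_at m i (Suc k))"
  shows "oprod n m (R_at m (i+k)) (Asym_at m i (Suc (Suc k))) =
    op_scale (- inverse q) (Asym_at m i (Suc (Suc k)))"
proof -
  define a where "a = Asym_at m i (Suc k)"
  define s where "s = R_at m (i + k)"
  define W where "W = op_diff (op_scale (q ^ Suc k) (Id_at m)) (op_scale (qnum q (Suc k)) s)"
  have hecke: "oprod n m s s = op_add (op_scale (q - inverse q) s) (Id_at m)"
    unfolding s_def by (rule R_at_hecke) (use k in simp)
  have "oprod n m s (oprod n m (oprod n m a W) a) = op_scale (- inverse q) (oprod n m (oprod n m a W) a)"
  proof (cases k)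
    case 0
    have "a = Id_at m" by (simp add: a_def 0 Asym_at_def Id_at_def)
    moreover have "restr n m s = s" by (simp add: s_def)
    ultimately show ?thesis
      using q_nz by (simp add: 0 W_def oprod_distribs hecke restr_diff restr_scale qnum_1[unfolded One_nat_def] s_def[symmetric])
        (simp add: fun_eq_iff op_apply field_simps)
  next
    case (Suc k1)
    define b where "b = Asym_at m i (Suc k1)"
    define t where "t = R_at m (i + k1)"
    have ta: "oprod n m t a = op_scale (- inverse q) a"
      unfolding t_def a_def using below[of k1] Suc by simp
    have "oprod n m (cmap (\<lambda>x. x) b) a = restr n m a"
      unfolding b_def using k Suc below
      by (intro cmap_Asym_at_absorbs[OF scalar_hom_id]) (auto simp: a_def intro: qadm_mono)
    then have ba: "oprod n m b a = a" by (simp add: a_def)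
    have bs: "oprod n m b s = oprod n m s b"
      unfolding b_def s_def Suc by (rule Asym_at_R_at_commute) (use k Suc in auto)
    have braid: "oprod n m (oprod n m s t) s = oprod n m (oprod n m t s) t"
      unfolding s_def t_def Suc using R_at_braid[of "i + k1" m] k Suc by simp
    have a_eq: "a = op_scale (inverse (qnum q (Suc (Suc k1))))
        (oprod n m (oprod n m b (op_diff (op_scale (q ^ Suc k1) (Id_at m)) (op_scale (qnum q (Suc k1)) t))) b)"
      unfolding a_def b_def t_def Suc by (rule Asym_at_Suc_Suc) (use k Suc in simp)
    have W: "W = op_diff (op_scale (q * q ^ Suc k1) (Id_at m)) (op_scale (qnum q (Suc (Suc k1))) s)"
      unfolding W_def Suc by simp
    show ?thesis
      unfolding W
      by (rule R_eigen_extend_A[OF ta braid hecke ba bs a_eq qnum_Suc_left[OF q_nz]])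
        (simp_all add: a_def b_def)
  qed
  then show ?thesis
    using Asym_at_Suc_Suc[OF k(2)] unfolding a_def s_def W_def
    by (simp add: oprod_scale_right_comm op_scale_op_scale_commute)
qed

lemma R_at_Asym_at:
  "qadm q k \<Longrightarrow> i + k \<le> m \<Longrightarrow> j + 1 < k \<Longrightarrow>
   oprod n m (R_at m (i+j)) (Asym_at m i k) = op_scale (- inverse q) (Asym_at m i k)"
proof (induction k arbitrary: j rule: less_induct)
  case (less k)
  then have "2 \<le> k" by simp
  then obtain k0 where k: "k = Suc (Suc k0)" using le_Suc_ex[of 2 k] by auto
  have m: "i + Suc (Suc k0) \<le> m" using less.prems k by simp
  have IH: "oprod n m (R_at m (i+j')) (Asym_at m i (Suc k0)) = op_scale (- inverse q) (Asym_at m i (Suc k0))"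
    if "j' + 1 < Suc k0" for j'
    using less.prems that k qadm_mono[OF less.prems(1)] by (intro less.IH) auto
  show ?case
  proof (cases "j < k0")
    case True
    then show ?thesis
      unfolding k Asym_at_Suc_Suc[OF m]
      by (simp add: oprod_distribs oprod_assoc oprod_assoc_subst[OF IH])
        (simp add: fun_eq_iff op_apply algebra_simps)
  next
    case False
    then have "j = k0" using less.prems k by simp
    then show ?thesis unfolding k by (simp only:) (rule R_at_Asym_at_last[OF _ m IH], use less.prems k in simp)
  qed
qed

lemma Ssym_at_R_at_last:
  assumes k: "qadm q (Suc (Suc k))" "i + Suc (Suc k) \<le> m"
    and below: "\<And>j. j + 1 < Suc k \<Longrightarrow>
      oprod n m (Ssym_at m i (Suc k)) (R_at m (i+j)) = op_scale q (Ssym_at m i (Suc k))"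
  shows "oprod n m (Ssym_at m i (Suc (Suc k))) (R_at m (i+k)) = op_scale q (Ssym_at m i (Suc (Suc k)))"
proof -
  define a where "a = Ssym_at m i (Suc k)"
  define s where "s = R_at m (i + k)"
  define W where "W = op_add (op_scale (q powi (- int (Suc k))) (Id_at m)) (op_scale (qnum q (Suc k)) s)"
  have hecke: "oprod n m s s = op_add (op_scale (q - inverse q) s) (Id_at m)"
    unfolding s_def by (rule R_at_hecke) (use k in simp)
  have "oprod n m (oprod n m (oprod n m a W) a) s = op_scale q (oprod n m (oprod n m a W) a)"
  proof (cases k)
    case 0
    have "a = Id_at m" by (simp add: a_def 0 Ssym_at_def Id_at_def)
    moreover have "restr n m s = s" by (simp add: s_def)
    ultimately show ?thesis
      using q_nz by (simp add: 0 W_def oprod_distribs hecke restr_add restr_scale qnum_1[unfolded One_nat_def] s_def[symmetric])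
        (simp add: fun_eq_iff op_apply field_simps power_int_minus)
  next
    case (Suc k1)
    define b where "b = Ssym_at m i (Suc k1)"
    define t where "t = R_at m (i + k1)"
    have at: "oprod n m a t = op_scale q a"
      unfolding t_def a_def using below[of k1] Suc by simp
    have "oprod n m a (cmap (\<lambda>x. x) b) = restr n m a"
      unfolding b_def using k Suc below
      by (intro cmap_Ssym_at_absorbs[OF scalar_hom_id]) (auto simp: a_def intro: qadm_mono)
    then have ab: "oprod n m a b = a" by (simp add: a_def)
    have bs: "oprod n m b s = oprod n m s b"
      unfolding b_def s_def Suc by (rule Ssym_at_R_at_commute) (use k Suc in auto)
    have braid: "oprod n m (oprod n m s t) s = oprod n m (oprod n m t s) t"
      unfolding s_def t_def Suc using R_at_braid[of "i + k1" m] k Suc by simp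
    have a_eq: "a = op_scale (inverse (qnum q (Suc (Suc k1))))
        (oprod n m (oprod n m b (op_add (op_scale (q powi (- int (Suc k1))) (Id_at m)) (op_scale (qnum q (Suc k1)) t))) b)"
      unfolding a_def b_def t_def Suc by (rule Ssym_at_Suc_Suc) (use k Suc in simp)
    have e: "- int (Suc (Suc k1)) = - int (Suc k1) + (-1)" by simp
    have "q powi (- int (Suc (Suc k1))) = inverse q * q powi (- int (Suc k1))"
      unfolding e by (subst power_int_add) (use q_nz in \<open>simp_all add: power_int_minus mult.commute\<close>)
    then have W: "W = op_add (op_scale (inverse q * q powi (- int (Suc k1))) (Id_at m)) (op_scale (qnum q (Suc (Suc k1))) s)"
      unfolding W_def Suc by simp
    show ?thesis
      unfolding W
      by (rule R_eigen_extend_S[OF at braid hecke ab bs a_eq qnum_Suc_right[OF q_nz]])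
        (simp_all add: a_def b_def)
  qed
  then show ?thesis
    using Ssym_at_Suc_Suc[OF k(2)] unfolding a_def s_def W_def
    by (simp add: oprod_scale_left op_scale_op_scale_commute)
qed

lemma Ssym_at_R_at:
  "qadm q k \<Longrightarrow> i + k \<le> m \<Longrightarrow> j + 1 < k \<Longrightarrow>
   oprod n m (Ssym_at m i k) (R_at m (i+j)) = op_scale q (Ssym_at m i k)"
proof (induction k arbitrary: j rule: less_induct)
  case (less k)
  then have "2 \<le> k" by simp
  then obtain k0 where k: "k = Suc (Suc k0)" using le_Suc_ex[of 2 k] by auto
  have m: "i + Suc (Suc k0) \<le> m" using less.prems k by simp
  have IH: "oprod n m (Ssym_at m i (Suc k0)) (R_at m (i+j')) = op_scale q (Ssym_at m i (Suc k0))"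
    if "j' + 1 < Suc k0" for j'
    using less.prems that k qadm_mono[OF less.prems(1)] by (intro less.IH) auto
  show ?case
  proof (cases "j < k0")
    case True
    then show ?thesis
      unfolding k Ssym_at_Suc_Suc[OF m]
      by (simp add: oprod_distribs oprod_assoc IH)
        (simp add: fun_eq_iff op_apply algebra_simps)
  next
    case False
    then have "j = k0" using less.prems k by simp
    then show ?thesis unfolding k by (simp only:) (rule Ssym_at_R_at_last[OF _ m IH], use less.prems k in simp)
  qed
qed

lemma A_at_Asym_at:
  assumes "qadm q k" "i + k \<le> m" "j + 1 < k"
  shows "oprod n m (A_at m (i+j)) (Asym_at m i k) = Asym_at m i k"
  using R_at_Asym_at[OF assms] assms c2_nz
  by (simp add: A_at_eq oprod_distribs) (simp add: fun_eq_iff op_apply field_simps)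

lemma Ssym_at_S_at:
  assumes "qadm q k" "i + k \<le> m" "j + 1 < k"
  shows "oprod n m (Ssym_at m i k) (S_at m (i+j)) = Ssym_at m i k"
  using Ssym_at_R_at[OF assms] assms c2_nz
  by (simp add: S_at_eq_R oprod_distribs) (simp add: fun_eq_iff op_apply field_simps)

section \<open>Products \<open>M\<^sub>l \<cdots> M\<^sub>l\<^sub>+\<^sub>k\<^sub>-\<^sub>1\<close> and the (anti)symmetrizers\<close>

definition Mrange_at :: "nat \<Rightarrow> nat \<Rightarrow> nat \<Rightarrow> 'a op" where
  "Mrange_at m l len = restr n m (Mrange n m \<iota> F Fi M l len)"

lemma restr_Mrange_at [simp]: "restr n m (Mrange_at m l len) = Mrange_at m l len"
  by (simp add: Mrange_at_def)

lemma Mrange_at_0: "Mrange_at m l 0 = restr n m idm"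
  by (simp add: Mrange_at_def)

lemma Mrange_at_Suc: "Mrange_at m l (Suc len) = oprod n m (Mrange_at m l len) (Mbar_at m (l + len))"
  by (simp add: Mrange_at_def Mbar_at_def)

lemma Mrange_at_add: "Mrange_at m l (a + b) = oprod n m (Mrange_at m l a) (Mrange_at m (l + a) b)"
proof (induction b)
  case 0
  then show ?case by (simp add: Mrange_at_0)
next
  case (Suc b)
  then show ?case by (simp add: Mrange_at_Suc oprod_assoc add.assoc)
qed

lemma Mrange_at_2: "Mrange_at m l 2 = oprod n m (Mbar_at m l) (Mbar_at m (Suc l))"
  using Mrange_at_Suc[of m l 1] Mrange_at_Suc[of m l 0] by (simp add: Mrange_at_0 numeral_2_eq_2)

lemma Mrange_at_split3:
  assumes "i \<le> p" "p + 2 \<le> i + k"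
  shows "Mrange_at m (Suc i) k =
    oprod n m (oprod n m (Mrange_at m (Suc i) (p - i)) (Mrange_at m (Suc p) 2)) (Mrange_at m (p + 3) (i + k - p - 2))"
proof -
  have "k = (p - i) + 2 + (i + k - p - 2)" using assms by simp
  then have "Mrange_at m (Suc i) k = Mrange_at m (Suc i) ((p - i) + 2 + (i + k - p - 2))"
    by (rule arg_cong)
  also have "\<dots> = oprod n m (oprod n m (Mrange_at m (Suc i) (p - i)) (Mrange_at m (Suc i + (p - i)) 2))
      (Mrange_at m (Suc i + ((p - i) + 2)) (i + k - p - 2))"
    by (simp only: Mrange_at_add)
  finally show ?thesis using assms by (simp add: numeral_3_eq_3)
qed

lemma Mrange_at_commute:
  assumes "\<And>j. l \<le> j \<Longrightarrow> j < l + len \<Longrightarrow> oprod n m Z (Mbar_at m j) = oprod n m (Mbar_at m j) Z"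
    and "restr n m Z = Z"
  shows "oprod n m Z (Mrange_at m l len) = oprod n m (Mrange_at m l len) Z"
  using assms(1)
proof (induction len)
  case 0
  then show ?case by (simp add: Mrange_at_0 assms(2))
next
  case (Suc len)
  then show ?case unfolding Mrange_at_Suc by (intro oprod_commute_oprod) auto
qed

lemma half_quantum_A_at: "p + 2 \<le> m \<Longrightarrow>
  oprod n m (Mrange_at m (Suc p) 2) (emb (A_at m p)) =
  oprod n m (oprod n m (emb (A_at m p)) (Mrange_at m (Suc p) 2)) (emb (A_at m p))"
  by (rule oprod_complement_left)
    (use half_quantum_at[of p m] in \<open>simp add: Mrange_at_2 oprod_assoc S_at_eq emb_simps Id_at_def\<close>)

lemma half_quantum_S_at: "p + 2 \<le> m \<Longrightarrow>
  oprod n m (emb (S_at m p)) (Mrange_at m (Suc p) 2) =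
  oprod n m (oprod n m (emb (S_at m p)) (Mrange_at m (Suc p) 2)) (emb (S_at m p))"
proof (rule oprod_complement_right)
  assume "p + 2 \<le> m"
  then have "emb (A_at m p) = op_diff (restr n m idm) (emb (S_at m p))"
    unfolding S_at_eq[OF \<open>p + 2 \<le> m\<close>] cmap_diff[OF scalar_hom] emb_Id_at
    by (simp add: fun_eq_iff op_apply A_at_def restr_def)
  then show "oprod n m (oprod n m (emb (S_at m p)) (Mrange_at m (Suc p) 2)) (op_diff (restr n m idm) (emb (S_at m p))) = (\<lambda>_ _. 0)"
    using half_quantum_at[of p m] \<open>p + 2 \<le> m\<close> by (simp add: Mrange_at_2 oprod_assoc)
qed

text \<open>Split \<open>M\<^sub>i\<^sub>+\<^sub>1 \<cdots> M\<^sub>i\<^sub>+\<^sub>k\<close> at \<open>M\<^sub>p\<^sub>+\<^sub>1M\<^sub>p\<^sub>+\<^sub>2\<close>: the factors before it commute with \<open>A\<^sub>p\<close>, \<open>S\<^sub>p\<close>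
  because they only involve earlier tensor factors, those after it by the exchange relations (i).\<close>

lemma Mrange_at_A_at:
  assumes "i \<le> p" "p + 2 \<le> i + k" "i + k \<le> m"
  shows "oprod n m (Mrange_at m (Suc i) k) (emb (A_at m p)) =
    oprod n m (oprod n m (emb (A_at m p)) (Mrange_at m (Suc i) k)) (emb (A_at m p))"
  unfolding Mrange_at_split3[OF assms(1,2)]
proof (rule oprod_sandwich_absorb_right)
  show "oprod n m (emb (A_at m p)) (Mrange_at m (Suc i) (p - i)) = oprod n m (Mrange_at m (Suc i) (p - i)) (emb (A_at m p))"
    unfolding A_at_def by (rule Mrange_at_commute) (use assms Mbar_at_commute_later in auto)
  show "oprod n m (emb (A_at m p)) (Mrange_at m (p + 3) (i + k - p - 2)) =
        oprod n m (Mrange_at m (p + 3) (i + k - p - 2)) (emb (A_at m p))"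
    by (rule Mrange_at_commute) (use assms A_at_Mbar_at_commute in \<open>auto simp: A_at_def\<close>)
  show "oprod n m (Mrange_at m (Suc p) 2) (emb (A_at m p)) =
        oprod n m (oprod n m (emb (A_at m p)) (Mrange_at m (Suc p) 2)) (emb (A_at m p))"
    by (rule half_quantum_A_at) (use assms in simp)
qed

lemma S_at_Mrange_at:
  assumes "i \<le> p" "p + 2 \<le> i + k" "i + k \<le> m"
  shows "oprod n m (emb (S_at m p)) (Mrange_at m (Suc i) k) =
    oprod n m (oprod n m (emb (S_at m p)) (Mrange_at m (Suc i) k)) (emb (S_at m p))"
  unfolding Mrange_at_split3[OF assms(1,2)]
proof (rule oprod_sandwich_absorb_left)
  show "oprod n m (emb (S_at m p)) (Mrange_at m (Suc i) (p - i)) = oprod n m (Mrange_at m (Suc i) (p - i)) (emb (S_at m p))"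
    unfolding S_at_def by (rule Mrange_at_commute) (use assms Mbar_at_commute_later in auto)
  show "oprod n m (emb (S_at m p)) (Mrange_at m (p + 3) (i + k - p - 2)) =
        oprod n m (Mrange_at m (p + 3) (i + k - p - 2)) (emb (S_at m p))"
    by (rule Mrange_at_commute) (use assms S_at_Mbar_at_commute in \<open>auto simp: S_at_def\<close>)
  show "oprod n m (emb (S_at m p)) (Mrange_at m (Suc p) 2) =
        oprod n m (oprod n m (emb (S_at m p)) (Mrange_at m (Suc p) 2)) (emb (S_at m p))"
    by (rule half_quantum_S_at) (use assms in simp)
qed

lemma emb_R_at_eigen:
  assumes "j + 2 \<le> m" "oprod n m (emb (A_at m j)) Y = restr n m Y"
  shows "oprod n m (emb (R_at m j)) Y = op_scale (\<iota> (- inverse q)) (restr n m Y)"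
proof -
  have "\<iota> q * y - \<iota> c2 * y = \<iota> (- inverse q) * y" for y
    using scalar_hom_diff[OF scalar_hom, of q c2] by (simp add: left_diff_distrib[symmetric])
  then show ?thesis
    using assms by (simp add: R_at_eq emb_simps oprod_emb_distribs Id_at_def fun_eq_iff op_apply)
qed

lemma emb_R_at_eigen_right:
  assumes "j + 2 \<le> m" "oprod n m Y (emb (S_at m j)) = restr n m Y"
  shows "oprod n m Y (emb (R_at m j)) = op_scale (\<iota> q) (restr n m Y)"
proof -
  have "\<iota> c2 * y - \<iota> (inverse q) * y = \<iota> q * y" for y
    using scalar_hom_diff[OF scalar_hom, of c2 "inverse q"] by (simp add: left_diff_distrib[symmetric])
  then show ?thesis
    using assms by (simp add: R_at_eq_S emb_simps oprod_emb_distribs Id_at_def fun_eq_iff op_apply)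
qed

lemma Asym_at_Mrange_at:
  assumes k: "1 \<le> k" "qadm q k" "i + k \<le> m"
  shows "oprod n m (oprod n m (emb (Asym_at m i k)) (Mrange_at m (Suc i) k)) (emb (Asym_at m i k)) =
    oprod n m (Mrange_at m (Suc i) k) (emb (Asym_at m i k))"
proof -
  have "oprod n m (emb (A_at m (i+j))) (oprod n m (Mrange_at m (Suc i) k) (emb (Asym_at m i k))) =
        oprod n m (Mrange_at m (Suc i) k) (emb (Asym_at m i k))" if j: "j + 1 < k" for j
  proof (rule oprod_absorb_left)
    show "oprod n m (emb (A_at m (i+j))) (emb (Asym_at m i k)) = emb (Asym_at m i k)"
      using arg_cong[OF A_at_Asym_at[OF k(2,3) j], of emb] by (simp add: emb_simps)
    show "oprod n m (Mrange_at m (Suc i) k) (emb (A_at m (i+j))) =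
          oprod n m (oprod n m (emb (A_at m (i+j))) (Mrange_at m (Suc i) k)) (emb (A_at m (i+j)))"
      by (rule Mrange_at_A_at) (use k j in auto)
  qed
  then have "oprod n m (emb (Asym_at m i k)) (oprod n m (Mrange_at m (Suc i) k) (emb (Asym_at m i k))) =
             restr n m (oprod n m (Mrange_at m (Suc i) k) (emb (Asym_at m i k)))"
    using k by (intro cmap_Asym_at_absorbs[OF scalar_hom _ k] emb_R_at_eigen) (auto simp: alg_central)
  then show ?thesis by (simp add: oprod_assoc)
qed

lemma Ssym_at_Mrange_at:
  assumes k: "1 \<le> k" "qadm q k" "i + k \<le> m"
  shows "oprod n m (oprod n m (emb (Ssym_at m i k)) (Mrange_at m (Suc i) k)) (emb (Ssym_at m i k)) =
    oprod n m (emb (Ssym_at m i k)) (Mrange_at m (Suc i) k)"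
proof -
  have "oprod n m (oprod n m (emb (Ssym_at m i k)) (Mrange_at m (Suc i) k)) (emb (S_at m (i+j))) =
        oprod n m (emb (Ssym_at m i k)) (Mrange_at m (Suc i) k)" if j: "j + 1 < k" for j
  proof (rule oprod_absorb_right)
    show "oprod n m (emb (Ssym_at m i k)) (emb (S_at m (i+j))) = emb (Ssym_at m i k)"
      using arg_cong[OF Ssym_at_S_at[OF k(2,3) j], of emb] by (simp add: emb_simps)
    show "oprod n m (emb (S_at m (i+j))) (Mrange_at m (Suc i) k) =
          oprod n m (oprod n m (emb (S_at m (i+j))) (Mrange_at m (Suc i) k)) (emb (S_at m (i+j)))"
      by (rule S_at_Mrange_at) (use k j in auto)
  qed
  then have "oprod n m (oprod n m (emb (Ssym_at m i k)) (Mrange_at m (Suc i) k)) (emb (Ssym_at m i k)) =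
             restr n m (oprod n m (emb (Ssym_at m i k)) (Mrange_at m (Suc i) k))"
    using k by (intro cmap_Ssym_at_absorbs[OF scalar_hom _ k] emb_R_at_eigen_right) (auto simp: alg_central)
  then show ?thesis by simp
qed

lemma half_quantum_meq:
  assumes "1 \<le> j"
  shows "meq n (j+1)
    (mmul n (j+1) (mmul n (j+1) (mmul n (j+1) (cmap \<iota> (lift (j-1) 2 S2)) (Mbar n (j+1) \<iota> F Fi M j))
       (Mbar n (j+1) \<iota> F Fi M (j+1))) (cmap \<iota> (lift (j-1) 2 A2)))
    (\<lambda>_ _. 0)"
proof -
  obtain j' where j': "j = Suc j'" using assms by (cases j) auto
  show ?thesis
    using half_quantum_at[of j' "j+1"]
    unfolding meq_iff_restr_eq j' S_at_def A_at_def Mbar_at_def by (simp add: emb_simps)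
qed

lemma Asym_meq:
  assumes "1 \<le> k" "qadm q k"
  shows "meq n (i+k)
    (mmul n (i+k) (mmul n (i+k) (cmap \<iota> (lift i k (qA n q R k))) (Mrange n (i+k) \<iota> F Fi M (i+1) k))
       (cmap \<iota> (lift i k (qA n q R k))))
    (mmul n (i+k) (Mrange n (i+k) \<iota> F Fi M (i+1) k) (cmap \<iota> (lift i k (qA n q R k))))"
  using Asym_at_Mrange_at[of k i "i+k"] assms
  unfolding meq_iff_restr_eq Asym_at_def Mrange_at_def by (simp add: emb_simps)

lemma Ssym_meq:
  assumes "1 \<le> k" "qadm q k"
  shows "meq n (i+k)
    (mmul n (i+k) (mmul n (i+k) (cmap \<iota> (lift i k (qS n q R k))) (Mrange n (i+k) \<iota> F Fi M (i+1) k))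
       (cmap \<iota> (lift i k (qS n q R k))))
    (mmul n (i+k) (cmap \<iota> (lift i k (qS n q R k))) (Mrange n (i+k) \<iota> F Fi M (i+1) k))"
  using Ssym_at_Mrange_at[of k i "i+k"] assms
  unfolding meq_iff_restr_eq Ssym_at_def Mrange_at_def by (simp add: emb_simps)

end

theorem mainTheorem6:
  fixes n :: nat and q :: complex and R F Fi S2 A2 :: "complex op"
    and \<iota> :: "complex \<Rightarrow> 'a::ring_1" and M :: "'a op"
  assumes alg_add: "\<forall>a b. \<iota> (a + b) = \<iota> a + \<iota> b"
    and alg_mult: "\<forall>a b. \<iota> (a * b) = \<iota> a * \<iota> b"
    and alg_one: "\<iota> 1 = 1"
    and alg_central: "\<forall>a x. \<iota> a * x = x * \<iota> a"
    and q_nz: "q \<noteq> 0"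
    and R_aut: "\<exists>Ri. meq n 2 (mmul n 2 R Ri) idm \<and> meq n 2 (mmul n 2 Ri R) idm"
    and F_inv1: "meq n 2 (mmul n 2 F Fi) idm"
    and F_inv2: "meq n 2 (mmul n 2 Fi F) idm"
    and i1: "meq n 3 (mmul n 3 (mmul n 3 (lift 0 2 R) (lift 1 2 R)) (lift 0 2 R))
                      (mmul n 3 (mmul n 3 (lift 1 2 R) (lift 0 2 R)) (lift 1 2 R))"
    and i2: "meq n 3 (mmul n 3 (mmul n 3 (lift 0 2 F) (lift 1 2 F)) (lift 0 2 F))
                      (mmul n 3 (mmul n 3 (lift 1 2 F) (lift 0 2 F)) (lift 1 2 F))"
    and i3: "meq n 3 (mmul n 3 (mmul n 3 (lift 0 2 R) (lift 1 2 F)) (lift 0 2 F))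
                      (mmul n 3 (mmul n 3 (lift 1 2 F) (lift 0 2 F)) (lift 1 2 R))"
    and i4: "meq n 3 (mmul n 3 (mmul n 3 (lift 0 2 F) (lift 1 2 F)) (lift 0 2 R))
                      (mmul n 3 (mmul n 3 (lift 1 2 R) (lift 0 2 F)) (lift 1 2 F))"
    and ii_adm: "qadm q 2"
    and ii_S: "meq n 2 (mmul n 2 S2 S2) S2"
    and ii_A: "meq n 2 (mmul n 2 A2 A2) A2"
    and ii_sum: "meq n 2 (\<lambda>r c. S2 r c + A2 r c) idm"
    and ii_R: "meq n 2 R (\<lambda>r c. q * S2 r c - inverse q * A2 r c)"
    and iv: "\<exists>Psi Psii. meq n 2 (mmul n 2 Psi Psii) idm \<and> meq n 2 (mmul n 2 Psii Psi) idm
               \<and> meq n 2 (ptr2 n (mmul n 3 (lift 0 2 Psi) (lift 1 2 F))) flip"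
    and half_quantum:
      "meq n 2 (mmul n 2 (mmul n 2 (mmul n 2 (cmap \<iota> S2) (Mbar n 2 \<iota> F Fi M 1))
                                  (Mbar n 2 \<iota> F Fi M 2)) (cmap \<iota> A2)) (\<lambda>_ _. 0)"
  shows "(\<forall>j\<ge>1. meq n (j+1)
            (mmul n (j+1) (mmul n (j+1) (mmul n (j+1) (cmap \<iota> (lift (j-1) 2 S2))
                 (Mbar n (j+1) \<iota> F Fi M j)) (Mbar n (j+1) \<iota> F Fi M (j+1)))
                 (cmap \<iota> (lift (j-1) 2 A2)))
            (\<lambda>_ _. 0))
       \<and> (\<forall>k i. k \<ge> 1 \<longrightarrow> qadm q k \<longrightarrow>
            meq n (i+k)
              (mmul n (i+k) (mmul n (i+k) (cmap \<iota> (lift i k (qA n q R k)))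
                  (Mrange n (i+k) \<iota> F Fi M (i+1) k)) (cmap \<iota> (lift i k (qA n q R k))))
              (mmul n (i+k) (Mrange n (i+k) \<iota> F Fi M (i+1) k) (cmap \<iota> (lift i k (qA n q R k))))
          \<and> meq n (i+k)
              (mmul n (i+k) (mmul n (i+k) (cmap \<iota> (lift i k (qS n q R k)))
                  (Mrange n (i+k) \<iota> F Fi M (i+1) k)) (cmap \<iota> (lift i k (qS n q R k))))
              (mmul n (i+k) (cmap \<iota> (lift i k (qS n q R k))) (Mrange n (i+k) \<iota> F Fi M (i+1) k)))"
proof -
  interpret half_quantum_setting n q R F Fi S2 A2 \<iota> M
    using alg_add alg_mult alg_one alg_central q_nz F_inv1 F_inv2 i1 i2 i3 i4 ii_adm ii_A ii_sum ii_R
      half_quantum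
    by unfold_locales
  show ?thesis
    using half_quantum_meq Asym_meq Ssym_meq by blast
qed

end
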